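(* Suppose Assumption (H0) holds. Let $t\in[0,T]$ and $\mu=\sum_{i\in V}\delta_{(i,x_i)}\in E_d$. If $y\in\mathcal R(t,\mu)$ then $[y,\infty)\subseteq\mathcal R(t,\mu)$.
   Context: Labels $\mathcal I=\{\varnothing\}\cup\bigcup_{n\ge1}\mathbb N^n$ (finite words over $\mathbb N$), concatenation $ij$, $j\prec i$ iff $i=j\ell$ with $\ell\ne\varnothing$. $E_\ell$ is the set of measures $\sum_{i\in V}\delta_{(i,x_i)}$ on $\mathcal I\times\mathbb R^\ell$ with $V\subset\mathcal I$ finite, $x_i\in\mathbb R^\ell$, no $i,j\in V$ with $i\prec j$. On a complete filtered probability space $(\Omega,\mathcal F,\mathbb F,\mathbb P)$ over $[0,T]$ there are mutually independent $m$-dimensional Brownian motions $B^i$ and Poisson random measures $Q^i$ on $[0,T]\times\mathbb N$ with intensity $dt\,\gamma\sum_kp_k\delta_k$ ($\gamma>0$, $p_k\ge0$, $\sum p_k=1$), $i\in\mathcal I$. $A$ is a Polish space with bounded metric $d_A$; $\mathcal A$ is the set of families $\alpha=(\alpha^i)_{i\in\mathcal I}$ of $\mathbb F$-progressively measurable $A$-valued processes. Coefficients $\lambda:\mathbb R^d\times A\to\mathbb R^d$, $\sigma:\mathbb R^d\times A\to\mathbb R^{d\times m}$, $\lambda_Y:\mathbb R^d\times\mathbb R\times A\to\mathbb R$, $\sigma_Y:\mathbb R^d\times A\to\mathbb R^{1\times m}$ are measurable, and $g:\mathcal I\times\mathbb R^d\to\mathbb R$, $(i,x)\mapsto g_i(x)$.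 Branching system: for $t$, $\mu=\sum_{i\in V}\delta_{(i,x_i)}$, $\hat\mu=\sum_{i\in V}\delta_{(i,x_i,y_i)}\in E_{d+1}$, $\alpha\in\mathcal A$, the alive set is $\mathcal V^{t,\mu}_s=V$ for $s\le t$; a particle $i$ alive at $s\ge t$ dies at $\tau_i=\inf\{r>s:Q^i((s,r]\times\mathbb N)=1\}$ and, if $Q^i(\{\tau_i\}\times\{k\})=1$, is replaced by $i0,\dots,i(k-1)$. Positions $X^{t,\mu,\alpha,i}$, $Y^{t,\hat\mu,\alpha,i}$ equal $x_i,y_i$ for $s\le t$; offspring start at their parent's position at the branching time; while alive $dX^i_s=\lambda(X^i_s,\alpha^i_s)ds+\sigma(X^i_s,\alpha^i_s)dB^i_s$, $dY^i_s=\lambda_Y(X^i_s,Y^i_s,\alpha^i_s)ds+\sigma_Y(X^i_s,\alpha^i_s)dB^i_s$. Reachability set: $\mathcal R(t,\mu)=\{y\in\mathbb R:\exists\alpha\in\mathcal A,\ Y^{t,\hat\mu,\alpha,i}_T\ge g_i(X^{t,\mu,\alpha,i}_T)\ \forall i\in\mathcal V^{t,\mu}_T\ \text{a.s., with }\hat\mu=\sum_{i\in V}\delta_{(i,x_i,y)}\}$ (constraint vacuous if $\mathcal V^{t,\mu}_T=\emptyset$). Assumption (H0): (i) $\sum_kkp_k<\infty$; (ii) $\sup_a(|\lambda(0,a)|+|\sigma(0,a)|+|\lambda_Y(0,0,a)|+|\sigma_Y(0,a)|)<\infty$; (iii) there is $L$ with $|\lambda(x,a)-\lambda(x',a)|+|\sigma(x,a)-\sigma(x',a)|+|\lambda_Y(x,y,a)-\lambda_Y(x',y',a)|+|\sigma_Y(x,a)-\sigma_Y(x',a)|\le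 L(|x-x'|+|y-y'|)$; (iv) there is a nondecreasing $w$, $w(r)\to0$ as $r\to0$, with $|\lambda(x,a)-\lambda(x,a')|+|\sigma(x,a)-\sigma(x,a')|+|\lambda_Y(x,y,a)-\lambda_Y(x,y,a')|+|\sigma_Y(x,a)-\sigma_Y(x,a')|\le w(d_A(a,a'))$. *)

theory Defs
  imports "HOL-Probability.Probability"
begin

type_synonym label = "nat list"

definition lab_prec :: "label \<Rightarrow> label \<Rightarrow> bool" where
  "lab_prec j i \<longleftrightarrow> (\<exists>l. l \<noteq> [] \<and> i = j @ l)"

text \<open>A measure mu = sum over i in V of delta (i, x_i) in E is represented by the
  finite label set V together with the position map x (only its values on V matter).\<close>
definition in_E :: "label set \<Rightarrow> bool" where
  "in_E V \<longleftrightarrow> finite V \<and> (\<forall>i\<in>V. \<forall>j\<in>V. \<not> lab_prec i j)"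

definition complete_filtered_ps :: "'w measure \<Rightarrow> (real \<Rightarrow> 'w measure) \<Rightarrow> bool" where
  "complete_filtered_ps M F \<longleftrightarrow> prob_space M \<and>
     (\<forall>t. space (F t) = space M \<and> sets (F t) \<subseteq> sets M) \<and>
     (\<forall>s t. s \<le> t \<longrightarrow> sets (F s) \<subseteq> sets (F t)) \<and>
     (\<forall>A\<in>sets M. emeasure M A = 0 \<longrightarrow> (\<forall>N. N \<subseteq> A \<longrightarrow> N \<in> sets (F 0)))"

definition indep_of :: "'w measure \<Rightarrow> 'w set set \<Rightarrow> ('w \<Rightarrow> 'b) \<Rightarrow> 'b measure \<Rightarrow> bool" where
  "indep_of M G X N \<longleftrightarrow> X \<in> measurable M N \<and>
     (\<forall>A\<in>G. \<forall>C\<in>sets N. measure M (A \<inter> (X -` C \<inter> space M))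
                         = measure M A * measure M (X -` C \<inter> space M))"

definition brownian :: "'w measure \<Rightarrow> (real \<Rightarrow> 'w measure) \<Rightarrow> real \<Rightarrow> (real \<Rightarrow> 'w \<Rightarrow> real^'m) \<Rightarrow> bool" where
  "brownian M F T W \<longleftrightarrow>
     (\<forall>t\<in>{0..T}. W t \<in> borel_measurable (F t)) \<and>
     (AE \<omega> in M. W 0 \<omega> = 0 \<and> continuous_on {0..T} (\<lambda>t. W t \<omega>)) \<and>
     (\<forall>s t. 0 \<le> s \<and> s < t \<and> t \<le> T \<longrightarrow>
        distributed M lborel (\<lambda>\<omega>. W t \<omega> - W s \<omega>)
          (\<lambda>z. ennreal (\<Prod>j\<in>UNIV. normal_density 0 (sqrt (t - s)) (z $ j))) \<and>
        indep_of M (sets (F s)) (\<lambda>\<omega>. W t \<omega> - W s \<omega>) borel)"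

definition prm_intensity :: "real \<Rightarrow> (nat \<Rightarrow> real) \<Rightarrow> real \<Rightarrow> (real \<times> nat) set \<Rightarrow> real" where
  "prm_intensity \<gamma> p T S = \<gamma> * (\<Sum>k. p k * measure lborel {r\<in>{0..T}. (r, k) \<in> S})"

abbreviation time_mark_sets :: "(real \<times> nat) set set" where
  "time_mark_sets \<equiv> sets ((borel :: real measure) \<Otimes>\<^sub>M (count_space UNIV :: nat measure))"

text \<open>A (simple) random counting measure is represented by its random set of atoms Q \<omega>;
  Q(S) = card (Q \<omega> \<inter> S).  F-Poisson random measure on [0,T] \<times> \<nat>.\<close>
definition poisson_rm :: "'w measure \<Rightarrow> (real \<Rightarrow> 'w measure) \<Rightarrow> real \<Rightarrow> real \<Rightarrow> (nat \<Rightarrow> real)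
    \<Rightarrow> ('w \<Rightarrow> (real \<times> nat) set) \<Rightarrow> bool" where
  "poisson_rm M F T \<gamma> p Q \<longleftrightarrow>
     (AE \<omega> in M. finite (Q \<omega>) \<and> Q \<omega> \<subseteq> {0..T} \<times> UNIV) \<and>
     (\<forall>S\<in>time_mark_sets.
        (\<lambda>\<omega>. card (Q \<omega> \<inter> S)) \<in> measurable M (count_space UNIV) \<and>
        (\<forall>n. measure M {\<omega>\<in>space M. card (Q \<omega> \<inter> S) = n}
               = exp (- prm_intensity \<gamma> p T S) * prm_intensity \<gamma> p T S ^ n / fact n)) \<and>
     (\<forall>(J::nat set) S. finite J \<longrightarrow> (\<forall>j\<in>J. S j \<in> time_mark_sets) \<longrightarrow> disjoint_family_on S J \<longrightarrow>
        prob_space.indep_vars M (\<lambda>_. count_space UNIV) (\<lambda>j \<omega>. card (Q \<omega> \<inter> S j)) J) \<and>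
     (\<forall>s\<in>{0..T}. \<forall>S\<in>time_mark_sets.
        (S \<subseteq> {0..s} \<times> UNIV \<longrightarrow> (\<lambda>\<omega>. card (Q \<omega> \<inter> S)) \<in> measurable (F s) (count_space UNIV)) \<and>
        (S \<subseteq> {s<..T} \<times> UNIV \<longrightarrow> indep_of M (sets (F s)) (\<lambda>\<omega>. card (Q \<omega> \<inter> S)) (count_space UNIV)))"

definition sigma_BM :: "'w measure \<Rightarrow> real \<Rightarrow> (real \<Rightarrow> 'w \<Rightarrow> real^'m) \<Rightarrow> 'w set set" where
  "sigma_BM M T W = sigma_sets (space M)
     {W t -` C \<inter> space M | t C. t \<in> {0..T} \<and> C \<in> sets borel}"

definition sigma_PRM :: "'w measure \<Rightarrow> ('w \<Rightarrow> (real \<times> nat) set) \<Rightarrow> 'w set set" where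
  "sigma_PRM M Q = sigma_sets (space M)
     {{\<omega>\<in>space M. card (Q \<omega> \<inter> S) = n} | S n. S \<in> time_mark_sets}"

definition mutually_indep :: "'w measure \<Rightarrow> real \<Rightarrow> (label \<Rightarrow> real \<Rightarrow> 'w \<Rightarrow> real^'m)
    \<Rightarrow> (label \<Rightarrow> 'w \<Rightarrow> (real \<times> nat) set) \<Rightarrow> bool" where
  "mutually_indep M T B Q \<longleftrightarrow>
     prob_space.indep_sets M
       (\<lambda>k. case k of Inl i \<Rightarrow> sigma_BM M T (B i) | Inr i \<Rightarrow> sigma_PRM M (Q i)) UNIV"

definition progressive :: "(real \<Rightarrow> 'w measure) \<Rightarrow> real \<Rightarrow> (real \<Rightarrow> 'w \<Rightarrow> 'b::topological_space) \<Rightarrow> bool" where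
  "progressive F T X \<longleftrightarrow>
     (\<forall>t\<in>{0..T}. (\<lambda>(s, \<omega>). X s \<omega>) \<in> borel_measurable (restrict_space borel {0..t} \<Otimes>\<^sub>M F t))"

definition simple_pred :: "(real \<Rightarrow> 'w measure) \<Rightarrow> real \<Rightarrow> real list \<Rightarrow> (nat \<Rightarrow> 'w \<Rightarrow> real) \<Rightarrow> bool" where
  "simple_pred F T ts \<xi> \<longleftrightarrow> ts \<noteq> [] \<and> sorted_wrt (<) ts \<and> hd ts = 0 \<and> last ts = T \<and>
     (\<forall>k < length ts - 1. \<xi> k \<in> borel_measurable (F (ts ! k)) \<and>
        (\<exists>C. \<forall>\<omega>\<in>space (F (ts ! k)). \<bar>\<xi> k \<omega>\<bar> \<le> C))"

definition sp_val :: "real list \<Rightarrow> (nat \<Rightarrow> 'w \<Rightarrow> real) \<Rightarrow> real \<Rightarrow> 'w \<Rightarrow> real" where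
  "sp_val ts \<xi> s \<omega> = (\<Sum>k<length ts - 1. \<xi> k \<omega> * indicator {ts ! k<..ts ! Suc k} s)"

definition sp_int :: "(real \<Rightarrow> 'w \<Rightarrow> real) \<Rightarrow> real list \<Rightarrow> (nat \<Rightarrow> 'w \<Rightarrow> real) \<Rightarrow> real \<Rightarrow> 'w \<Rightarrow> real" where
  "sp_int W ts \<xi> s \<omega> =
     (\<Sum>k<length ts - 1. \<xi> k \<omega> * (W (min (ts ! Suc k) s) \<omega> - W (min (ts ! k) s) \<omega>))"

definition conv_prob0 :: "'w measure \<Rightarrow> (nat \<Rightarrow> 'w \<Rightarrow> real) \<Rightarrow> bool" where
  "conv_prob0 M Z \<longleftrightarrow> (\<forall>n. Z n \<in> borel_measurable M) \<and>
     (\<forall>e>0. (\<lambda>n. measure M {\<omega>\<in>space M. \<bar>Z n \<omega>\<bar> > e}) \<longlonglongrightarrow> 0)"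

definition is_ito :: "'w measure \<Rightarrow> (real \<Rightarrow> 'w measure) \<Rightarrow> real \<Rightarrow> (real \<Rightarrow> 'w \<Rightarrow> real)
    \<Rightarrow> (real \<Rightarrow> 'w \<Rightarrow> real) \<Rightarrow> (real \<Rightarrow> 'w \<Rightarrow> real) \<Rightarrow> bool" where
  "is_ito M F T W H I \<longleftrightarrow> progressive F T H \<and>
     (AE \<omega> in M. set_integrable lborel {0..T} (\<lambda>s. (H s \<omega>)\<^sup>2)) \<and>
     (\<forall>s\<in>{0..T}. I s \<in> borel_measurable (F s)) \<and>
     (AE \<omega> in M. continuous_on {0..T} (\<lambda>s. I s \<omega>)) \<and>
     (\<exists>ts \<xi>. (\<forall>n. simple_pred F T (ts n) (\<xi> n)) \<and>
        conv_prob0 M (\<lambda>n \<omega>. LINT s:{0..T}|lborel. (sp_val (ts n) (\<xi> n) s \<omega> - H s \<omega>)\<^sup>2) \<and>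
        conv_prob0 M (\<lambda>n \<omega>. Sup ((\<lambda>s. \<bar>sp_int W (ts n) (\<xi> n) s \<omega> - I s \<omega>\<bar>) ` {0..T})))"

definition first_atom :: "(real \<times> nat) set \<Rightarrow> real \<Rightarrow> real \<Rightarrow> (real \<times> nat) option" where
  "first_atom S b u = (if \<exists>r k. (r, k) \<in> S \<and> b < r \<and> r \<le> u
     then Some (SOME (r, k). (r, k) \<in> S \<and> b < r \<and> r \<le> u \<and>
                  (\<forall>r' k'. (r', k') \<in> S \<and> b < r' \<and> r' \<le> u \<longrightarrow> r \<le> r'))
     else None)"

text \<open>Birth time of a label (on a fixed sample path given by the atom sets q j = Q^j(\<omega>)),
  argument is the reversed label.  Particles of V are born at t; the child i c of i is
  born at the death time \<tau>_i of i if \<tau>_i \<le> T and the mark k of that atom satisfies c < k.\<close>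
fun birth_rev :: "label set \<Rightarrow> real \<Rightarrow> real \<Rightarrow> (label \<Rightarrow> (real \<times> nat) set) \<Rightarrow> label \<Rightarrow> real option" where
  "birth_rev V t T q [] = (if [] \<in> V then Some t else None)"
| "birth_rev V t T q (c # r) = (if rev (c # r) \<in> V then Some t else
     (case birth_rev V t T q r of
        None \<Rightarrow> None
      | Some b \<Rightarrow> (case first_atom (q (rev r)) b T of
                    None \<Rightarrow> None
                  | Some (\<tau>, k) \<Rightarrow> (if c < k then Some \<tau> else None))))"

definition birth :: "label set \<Rightarrow> real \<Rightarrow> real \<Rightarrow> (label \<Rightarrow> (real \<times> nat) set) \<Rightarrow> label \<Rightarrow> real option" where
  "birth V t T q i = birth_rev V t T q (rev i)"

definition stop_time :: "label set \<Rightarrow> real \<Rightarrow> real \<Rightarrow> (label \<Rightarrow> (real \<times> nat) set) \<Rightarrow> label \<Rightarrow> real" where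
  "stop_time V t T q i = (case birth V t T q i of None \<Rightarrow> T
     | Some b \<Rightarrow> (case first_atom (q i) b T of None \<Rightarrow> T | Some (\<tau>, k) \<Rightarrow> \<tau>))"

definition active :: "label set \<Rightarrow> real \<Rightarrow> real \<Rightarrow> (label \<Rightarrow> (real \<times> nat) set) \<Rightarrow> label \<Rightarrow> real \<Rightarrow> bool" where
  "active V t T q i r \<longleftrightarrow> (case birth V t T q i of None \<Rightarrow> False
     | Some b \<Rightarrow> b < r \<and> r \<le> stop_time V t T q i)"

definition alive_T :: "label set \<Rightarrow> real \<Rightarrow> real \<Rightarrow> (label \<Rightarrow> (real \<times> nat) set) \<Rightarrow> label \<Rightarrow> bool" where
  "alive_T V t T q i \<longleftrightarrow> (\<exists>b. birth V t T q i = Some b \<and> first_atom (q i) b T = None)"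

definition branching_sol ::
  "'w measure \<Rightarrow> (real \<Rightarrow> 'w measure) \<Rightarrow> real \<Rightarrow> (label \<Rightarrow> real \<Rightarrow> 'w \<Rightarrow> real^'m)
   \<Rightarrow> (label \<Rightarrow> 'w \<Rightarrow> (real \<times> nat) set)
   \<Rightarrow> (real^'d \<Rightarrow> 'a \<Rightarrow> real^'d) \<Rightarrow> (real^'d \<Rightarrow> 'a \<Rightarrow> real^'m^'d)
   \<Rightarrow> (real^'d \<Rightarrow> real \<Rightarrow> 'a \<Rightarrow> real) \<Rightarrow> (real^'d \<Rightarrow> 'a \<Rightarrow> real^'m)
   \<Rightarrow> (label \<Rightarrow> real \<Rightarrow> 'w \<Rightarrow> 'a) \<Rightarrow> real \<Rightarrow> label set \<Rightarrow> (label \<Rightarrow> real^'d) \<Rightarrow> real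
   \<Rightarrow> (label \<Rightarrow> real \<Rightarrow> 'w \<Rightarrow> real^'d) \<Rightarrow> (label \<Rightarrow> real \<Rightarrow> 'w \<Rightarrow> real) \<Rightarrow> bool" where
  "branching_sol M F T B Q lam sig lamY sigY \<alpha> t V x y X Y \<longleftrightarrow>
     (AE \<omega> in M. \<forall>i\<in>V. \<forall>s\<in>{0..t}. X i s \<omega> = x i \<and> Y i s \<omega> = y) \<and>
     (AE \<omega> in M. \<forall>i c b. i @ [c] \<notin> V \<longrightarrow> birth V t T (\<lambda>j. Q j \<omega>) (i @ [c]) = Some b \<longrightarrow>
         X (i @ [c]) b \<omega> = X i b \<omega> \<and> Y (i @ [c]) b \<omega> = Y i b \<omega>) \<and>
     (\<forall>i. \<exists>(I :: 'd \<Rightarrow> 'm \<Rightarrow> real \<Rightarrow> 'w \<Rightarrow> real) (J :: 'm \<Rightarrow> real \<Rightarrow> 'w \<Rightarrow> real).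
        (\<forall>j k. is_ito M F T (\<lambda>s \<omega>. B i s \<omega> $ k)
           (\<lambda>r \<omega>. if active V t T (\<lambda>l. Q l \<omega>) i r then sig (X i r \<omega>) (\<alpha> i r \<omega>) $ j $ k else 0) (I j k)) \<and>
        (\<forall>k. is_ito M F T (\<lambda>s \<omega>. B i s \<omega> $ k)
           (\<lambda>r \<omega>. if active V t T (\<lambda>l. Q l \<omega>) i r then sigY (X i r \<omega>) (\<alpha> i r \<omega>) $ k else 0) (J k)) \<and>
        (AE \<omega> in M. \<forall>b. birth V t T (\<lambda>l. Q l \<omega>) i = Some b \<longrightarrow>
           (let \<rho> = stop_time V t T (\<lambda>l. Q l \<omega>) i in
            set_integrable lborel {b..\<rho>} (\<lambda>r. lam (X i r \<omega>) (\<alpha> i r \<omega>)) \<and>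
            set_integrable lborel {b..\<rho>} (\<lambda>r. lamY (X i r \<omega>) (Y i r \<omega>) (\<alpha> i r \<omega>)) \<and>
            (\<forall>s\<in>{b..\<rho>}.
               X i s \<omega> = X i b \<omega> + set_lebesgue_integral lborel {b..s} (\<lambda>r. lam (X i r \<omega>) (\<alpha> i r \<omega>))
                  + (\<chi> j. \<Sum>k\<in>UNIV. I j k s \<omega> - I j k b \<omega>) \<and>
               Y i s \<omega> = Y i b \<omega> + set_lebesgue_integral lborel {b..s} (\<lambda>r. lamY (X i r \<omega>) (Y i r \<omega>) (\<alpha> i r \<omega>))
                  + (\<Sum>k\<in>UNIV. J k s \<omega> - J k b \<omega>)))))"

text \<open>Reachability set R(t,\<mu>), \<mu> represented by (V, x).  The controlled system is required
  to have a solution, and the (under (H0) unique) solution satisfies the terminal constraint.\<close>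
definition reach ::
  "'w measure \<Rightarrow> (real \<Rightarrow> 'w measure) \<Rightarrow> real \<Rightarrow> (label \<Rightarrow> real \<Rightarrow> 'w \<Rightarrow> real^'m)
   \<Rightarrow> (label \<Rightarrow> 'w \<Rightarrow> (real \<times> nat) set)
   \<Rightarrow> (real^'d \<Rightarrow> 'a::topological_space \<Rightarrow> real^'d) \<Rightarrow> (real^'d \<Rightarrow> 'a \<Rightarrow> real^'m^'d)
   \<Rightarrow> (real^'d \<Rightarrow> real \<Rightarrow> 'a \<Rightarrow> real) \<Rightarrow> (real^'d \<Rightarrow> 'a \<Rightarrow> real^'m)
   \<Rightarrow> (label \<Rightarrow> real^'d \<Rightarrow> real) \<Rightarrow> real \<Rightarrow> label set \<Rightarrow> (label \<Rightarrow> real^'d) \<Rightarrow> real set" where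
  "reach M F T B Q lam sig lamY sigY g t V x = {y. \<exists>\<alpha>. (\<forall>i. progressive F T (\<alpha> i)) \<and>
     (\<exists>X Y. branching_sol M F T B Q lam sig lamY sigY \<alpha> t V x y X Y) \<and>
     (\<forall>X Y. branching_sol M F T B Q lam sig lamY sigY \<alpha> t V x y X Y \<longrightarrow>
        (AE \<omega> in M. \<forall>i. alive_T V t T (\<lambda>l. Q l \<omega>) i \<longrightarrow> g i (X i T \<omega>) \<le> Y i T \<omega>))}"

end

theory Submission
  imports Defs
begin

(* Fix the control.  If (X, Y) solves the system from y, then Y + D solves it from y', where along
   each particle D solves the pathwise equation D' = lamY(X, Y + D, alpha) - lamY(X, Y, alpha),
   started at y' - y for the initial particles and at the parent's value at the branching time for
   offspring; the stochastic integrals are unchanged because sig and sigY do not depend on Y.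
   Hence the system from y' is solvable.  Conversely, shifting any solution from y' back to y
   starts D at y - y' <= 0, and by Gronwall's lemma D stays nonpositive, so every solution from y'
   dominates at time T a solution from y, which satisfies the terminal constraint. *)

section \<open>Caratheodory equations with a Lipschitz right-hand side\<close>

definition lipschitz_rhs :: "(real \<Rightarrow> real \<Rightarrow> real) \<Rightarrow> real \<Rightarrow> real \<Rightarrow> real \<Rightarrow> bool" where
  "lipschitz_rhs G L b \<rho> \<longleftrightarrow> L > 0 \<and>
     (\<forall>r\<in>{b..\<rho>}. \<forall>v w. \<bar>G r v - G r w\<bar> \<le> L * \<bar>v - w\<bar>) \<and> (\<forall>r\<in>{b..\<rho>}. G r 0 = 0) \<and>
     (\<forall>u. continuous_on {b..\<rho>} u \<longrightarrow> (\<lambda>r. G r (u r)) \<in> borel_measurable (restrict_space borel {b..\<rho>}))"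

lemma integral_exp_weight_bound:
  fixes f :: "real \<Rightarrow> real"
  assumes "b \<le> s" "L > 0" "f integrable_on {b..s}"
    and f_le: "\<And>r. r \<in> {b..s} \<Longrightarrow> \<bar>f r\<bar> \<le> L * m * exp (2 * L * (r - b))"
  shows "\<bar>integral {b..s} f\<bar> \<le> m / 2 * exp (2 * L * (s - b))"
proof -
  define W where "W r = m / 2 * exp (2 * L * (r - b))" for r
  have "\<bar>f b\<bar> \<le> L * m" using f_le[of b] \<open>b \<le> s\<close> by simp
  then have "m \<ge> 0" using \<open>L > 0\<close> by (smt (verit) zero_le_mult_iff)
  have "((\<lambda>r. L * m * exp (2 * L * (r - b))) has_integral (W s - W b)) {b..s}"
  proof (rule fundamental_theorem_of_calculus[OF \<open>b \<le> s\<close>])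
    fix r assume "r \<in> {b..s}"
    show "(W has_vector_derivative L * m * exp (2 * L * (r - b))) (at r within {b..s})"
      unfolding W_def has_real_derivative_iff_has_vector_derivative[symmetric]
      by (auto intro!: derivative_eq_intros)
  qed
  then have "\<bar>integral {b..s} f\<bar> \<le> W s - W b"
    using integral_norm_bound_integral[OF \<open>f integrable_on {b..s}\<close>] f_le
    by (metis has_integral_integrable integral_unique real_norm_def)
  also have "\<dots> \<le> W s" using \<open>m \<ge> 0\<close> by (simp add: W_def)
  finally show ?thesis by (simp add: W_def)
qed

lemma lipschitz_rhs_set_integrable:
  assumes G: "lipschitz_rhs G L b \<rho>" and u: "continuous_on {b..\<rho>} u"
  shows "set_integrable lborel {b..\<rho>} (\<lambda>r. G r (u r))"
proof -
  obtain B where B: "\<And>r. r \<in> {b..\<rho>} \<Longrightarrow> \<bar>u r\<bar> \<le> B"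
    using continuous_on_compact_bound[OF compact_Icc u] by auto
  have "\<bar>G r (u r)\<bar> \<le> L * B" if "r \<in> {b..\<rho>}" for r
  proof -
    have "\<bar>G r (u r)\<bar> = \<bar>G r (u r) - G r 0\<bar>" using G that by (simp add: lipschitz_rhs_def)
    also have "\<dots> \<le> L * \<bar>u r\<bar>" using G that unfolding lipschitz_rhs_def by (metis diff_zero)
    also have "\<dots> \<le> L * B" using G B[OF that] by (simp add: lipschitz_rhs_def)
    finally show ?thesis .
  qed
  moreover have "(\<lambda>r. indicator {b..\<rho>} r *\<^sub>R G r (u r)) \<in> borel_measurable borel"
    using G u unfolding lipschitz_rhs_def
    by (subst borel_measurable_restrict_space_iff[symmetric]) auto
  ultimately show ?thesis unfolding set_integrable_def
    by (intro integrableI_bounded_set[where A="{b..\<rho>}" and B="L * B"])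
       (auto simp: indicator_def emeasure_lborel_Icc_eq)
qed

lemma lipschitz_rhs_integrable_on:
  assumes "lipschitz_rhs G L b \<rho>" "continuous_on {b..\<rho>} u" "s \<in> {b..\<rho>}"
  shows "(\<lambda>r. G r (u r)) integrable_on {b..s}"
  using set_borel_integral_eq_integral(1)[OF lipschitz_rhs_set_integrable[OF assms(1,2)]] assms(3)
  by (auto intro: integrable_subinterval_real)

text \<open>The Picard map is a contraction by a factor 1/2 for the weight \<open>exp (2 L (r - b))\<close>.\<close>

lemma lipschitz_rhs_integral_contraction:
  assumes G: "lipschitz_rhs G L b \<rho>" and u: "continuous_on {b..\<rho>} u" and v: "continuous_on {b..\<rho>} v"
    and uv: "\<And>r. r \<in> {b..\<rho>} \<Longrightarrow> \<bar>u r - v r\<bar> \<le> m * exp (2 * L * (r - b))" and s: "s \<in> {b..\<rho>}"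
  shows "\<bar>integral {b..s} (\<lambda>r. G r (u r)) - integral {b..s} (\<lambda>r. G r (v r))\<bar> \<le> m / 2 * exp (2 * L * (s - b))"
proof -
  have L: "L > 0" and lip: "\<And>r v w. r \<in> {b..\<rho>} \<Longrightarrow> \<bar>G r v - G r w\<bar> \<le> L * \<bar>v - w\<bar>"
    using G unfolding lipschitz_rhs_def by auto
  note int_u = lipschitz_rhs_integrable_on[OF G u s] and int_v = lipschitz_rhs_integrable_on[OF G v s]
  have "\<bar>G r (u r) - G r (v r)\<bar> \<le> L * m * exp (2 * L * (r - b))" if "r \<in> {b..s}" for r
  proof -
    have r: "r \<in> {b..\<rho>}" using that s by auto
    have "\<bar>G r (u r) - G r (v r)\<bar> \<le> L * \<bar>u r - v r\<bar>" using lip[OF r] .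
    also have "\<dots> \<le> L * (m * exp (2 * L * (r - b)))" using uv[OF r] L by simp
    finally show ?thesis by simp
  qed
  then have "\<bar>integral {b..s} (\<lambda>r. G r (u r) - G r (v r))\<bar> \<le> m / 2 * exp (2 * L * (s - b))"
    using s L integrable_diff[OF int_u int_v] by (intro integral_exp_weight_bound) auto
  then show ?thesis using integral_diff[OF int_u int_v] by simp
qed

lemma lipschitz_rhs_integral_tendsto:
  assumes G: "lipschitz_rhs G L b \<rho>" and u: "\<And>n. continuous_on {b..\<rho>} (u n)"
    and D: "continuous_on {b..\<rho>} D" and lim: "uniform_limit {b..\<rho>} u D sequentially"
    and s: "s \<in> {b..\<rho>}"
  shows "(\<lambda>n. integral {b..s} (\<lambda>r. G r (u n r))) \<longlonglongrightarrow> integral {b..s} (\<lambda>r. G r (D r))"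
proof (rule LIMSEQ_I)
  fix e :: real assume "e > 0"
  have L: "L > 0" using G by (simp add: lipschitz_rhs_def)
  define K where "K = exp (2 * L * (\<rho> - b))"
  have "K > 0" by (simp add: K_def)
  obtain N where N: "\<And>n r. n \<ge> N \<Longrightarrow> r \<in> {b..\<rho>} \<Longrightarrow> dist (u n r) (D r) < e / K"
    using uniform_limitD[OF lim] \<open>e > 0\<close> \<open>K > 0\<close> unfolding eventually_sequentially
    by (metis divide_pos_pos)
  show "\<exists>N. \<forall>n\<ge>N. norm (integral {b..s} (\<lambda>r. G r (u n r)) - integral {b..s} (\<lambda>r. G r (D r))) < e"
  proof (intro exI allI impI)
    fix n assume "n \<ge> N"
    have "\<bar>u n r - D r\<bar> \<le> e / K * exp (2 * L * (r - b))" if "r \<in> {b..\<rho>}" for r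
    proof -
      have "\<bar>u n r - D r\<bar> \<le> e / K" using N[OF \<open>n \<ge> N\<close> that] by (simp add: dist_real_def)
      also have "\<dots> \<le> e / K * exp (2 * L * (r - b))"
        using mult_left_mono[of 1 "exp (2 * L * (r - b))" "e / K"] that L \<open>e > 0\<close> \<open>K > 0\<close> by simp
      finally show ?thesis .
    qed
    then have "\<bar>integral {b..s} (\<lambda>r. G r (u n r)) - integral {b..s} (\<lambda>r. G r (D r))\<bar>
        \<le> e / K / 2 * exp (2 * L * (s - b))"
      by (rule lipschitz_rhs_integral_contraction[OF G u D _ s])
    also have "\<dots> \<le> e / K / 2 * K"
      using s L \<open>e > 0\<close> \<open>K > 0\<close> unfolding K_def by (intro mult_left_mono) auto
    also have "\<dots> < e" using \<open>e > 0\<close> \<open>K > 0\<close> by simp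
    finally show "norm (integral {b..s} (\<lambda>r. G r (u n r)) - integral {b..s} (\<lambda>r. G r (D r))) < e"
      by simp
  qed
qed

definition picard_iter :: "real \<Rightarrow> (real \<Rightarrow> real \<Rightarrow> real) \<Rightarrow> real \<Rightarrow> nat \<Rightarrow> real \<Rightarrow> real" where
  "picard_iter D0 G b n = ((\<lambda>u s. D0 + integral {b..s} (\<lambda>r. G r (u r))) ^^ n) (\<lambda>_. D0)"

lemma picard_iter_0: "picard_iter D0 G b 0 s = D0"
  by (simp add: picard_iter_def)

lemma picard_iter_Suc:
  "picard_iter D0 G b (Suc n) s = D0 + integral {b..s} (\<lambda>r. G r (picard_iter D0 G b n r))"
  by (simp add: picard_iter_def)

lemma picard_iter_continuous:
  assumes G: "lipschitz_rhs G L b \<rho>"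
  shows "continuous_on {b..\<rho>} (picard_iter D0 G b n)"
proof (induction n)
  case (Suc n)
  have "(\<lambda>r. G r (picard_iter D0 G b n r)) integrable_on {b..\<rho>}"
    using set_borel_integral_eq_integral(1)[OF lipschitz_rhs_set_integrable[OF G Suc]] .
  then show ?case
    unfolding picard_iter_Suc by (intro continuous_intros indefinite_integral_continuous_1)
qed (simp add: picard_iter_0)

lemma picard_iter_step_bound:
  assumes G: "lipschitz_rhs G L b \<rho>"
  obtains C where "\<And>n s. s \<in> {b..\<rho>} \<Longrightarrow>
    \<bar>picard_iter D0 G b (Suc n) s - picard_iter D0 G b n s\<bar> \<le> C * (1 / 2) ^ n"
proof -
  let ?u = "picard_iter D0 G b"
  have L: "L > 0" using G by (simp add: lipschitz_rhs_def)
  note u_cont = picard_iter_continuous[OF G, of D0]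
  obtain m where "m \<ge> 0" and m: "\<And>s. s \<in> {b..\<rho>} \<Longrightarrow> \<bar>?u 1 s - ?u 0 s\<bar> \<le> m"
    using continuous_on_compact_bound[OF compact_Icc continuous_on_diff[OF u_cont[of 1] u_cont[of 0]]]
    by (metis real_norm_def)
  have u_step: "\<bar>?u (Suc n) s - ?u n s\<bar> \<le> m / 2 ^ n * exp (2 * L * (s - b))" if "s \<in> {b..\<rho>}" for n s
    using that
  proof (induction n arbitrary: s)
    case 0
    then show ?case
      using m[OF 0] mult_left_mono[of 1 "exp (2 * L * (s - b))" m] L by force
  next
    case (Suc n)
    have "\<bar>?u (Suc (Suc n)) s - ?u (Suc n) s\<bar>
        = \<bar>integral {b..s} (\<lambda>r. G r (?u (Suc n) r)) - integral {b..s} (\<lambda>r. G r (?u n r))\<bar>"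
      by (simp add: picard_iter_Suc)
    also have "\<dots> \<le> m / 2 ^ n / 2 * exp (2 * L * (s - b))"
      by (rule lipschitz_rhs_integral_contraction[OF G u_cont u_cont Suc.IH Suc.prems])
    finally show ?case by simp
  qed
  show thesis
  proof (rule that)
    fix n s assume s: "s \<in> {b..\<rho>}"
    have "m / 2 ^ n * exp (2 * L * (s - b)) \<le> m / 2 ^ n * exp (2 * L * (\<rho> - b))"
      using s L \<open>m \<ge> 0\<close> by (intro mult_left_mono) auto
    then show "\<bar>?u (Suc n) s - ?u n s\<bar> \<le> m * exp (2 * L * (\<rho> - b)) * (1 / 2) ^ n"
      using u_step[OF s, of n] by (simp add: power_one_over)
  qed
qed

lemma picard_iter_uniform_limit:
  assumes G: "lipschitz_rhs G L b \<rho>"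
  obtains D where "uniform_limit {b..\<rho>} (picard_iter D0 G b) D sequentially"
proof -
  let ?u = "picard_iter D0 G b"
  obtain C where "\<And>n s. s \<in> {b..\<rho>} \<Longrightarrow> \<bar>?u (Suc n) s - ?u n s\<bar> \<le> C * (1 / 2) ^ n"
    using picard_iter_step_bound[OF G] by blast
  then have sums: "uniform_limit {b..\<rho>} (\<lambda>n s. \<Sum>i<n. ?u (Suc i) s - ?u i s) (\<lambda>s. \<Sum>i. ?u (Suc i) s - ?u i s) sequentially"
    by (intro Weierstrass_m_test[where M="\<lambda>n. C * (1 / 2) ^ n"] summable_mult summable_geometric) auto
  have "D0 + (\<Sum>i<n. ?u (Suc i) s - ?u i s) = ?u n s" for n s
    using sum_lessThan_telescope[of "\<lambda>i. ?u i s" n] by (simp add: picard_iter_0)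
  then have "uniform_limit {b..\<rho>} ?u (\<lambda>s. D0 + (\<Sum>i. ?u (Suc i) s - ?u i s)) sequentially"
    using uniform_limit_add[OF uniform_limit_const[where c="\<lambda>_. D0"] sums] by simp
  then show thesis by (rule that)
qed

lemma lipschitz_rhs_solution_exists:
  assumes G: "lipschitz_rhs G L b \<rho>"
  shows "\<exists>D. continuous_on {b..\<rho>} D \<and> (\<forall>s\<in>{b..\<rho>}. D s = D0 + integral {b..s} (\<lambda>r. G r (D r)))"
proof -
  obtain D where lim: "uniform_limit {b..\<rho>} (picard_iter D0 G b) D sequentially"
    using picard_iter_uniform_limit[OF G] by blast
  note u_cont = picard_iter_continuous[OF G]
  have D_cont: "continuous_on {b..\<rho>} D"
    using lim u_cont by (intro uniform_limit_theorem) auto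
  have "D s = D0 + integral {b..s} (\<lambda>r. G r (D r))" if s: "s \<in> {b..\<rho>}" for s
  proof (rule LIMSEQ_unique)
    show "(\<lambda>n. picard_iter D0 G b (Suc n) s) \<longlonglongrightarrow> D s"
      using LIMSEQ_Suc[OF tendsto_uniform_limitI[OF lim s]] .
    show "(\<lambda>n. picard_iter D0 G b (Suc n) s) \<longlonglongrightarrow> D0 + integral {b..s} (\<lambda>r. G r (D r))"
      unfolding picard_iter_Suc
      using lim by (intro tendsto_add tendsto_const lipschitz_rhs_integral_tendsto[OF G u_cont D_cont _ s])
  qed
  then show ?thesis using D_cont by blast
qed

definition rhs_solution :: "real \<Rightarrow> (real \<Rightarrow> real \<Rightarrow> real) \<Rightarrow> real \<Rightarrow> real \<Rightarrow> real \<Rightarrow> real" where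
  "rhs_solution D0 G b \<rho> s = (if s \<le> b then D0 else
     (SOME D. continuous_on {b..\<rho>} D \<and> (\<forall>s\<in>{b..\<rho>}. D s = D0 + integral {b..s} (\<lambda>r. G r (D r)))) s)"

lemma rhs_solution_before: "s \<le> b \<Longrightarrow> rhs_solution D0 G b \<rho> s = D0"
  by (simp add: rhs_solution_def)

lemma rhs_solution_solves:
  assumes "lipschitz_rhs G L b \<rho>"
  shows "continuous_on {b..\<rho>} (rhs_solution D0 G b \<rho>)"
    and "s \<in> {b..\<rho>} \<Longrightarrow> rhs_solution D0 G b \<rho> s = D0 + integral {b..s} (\<lambda>r. G r (rhs_solution D0 G b \<rho> r))"
proof -
  define D where "D = (SOME D. continuous_on {b..\<rho>} D \<and> (\<forall>s\<in>{b..\<rho>}. D s = D0 + integral {b..s} (\<lambda>r. G r (D r))))"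
  have D: "continuous_on {b..\<rho>} D" "\<And>s. s \<in> {b..\<rho>} \<Longrightarrow> D s = D0 + integral {b..s} (\<lambda>r. G r (D r))"
    using someI_ex[OF lipschitz_rhs_solution_exists[OF assms]] unfolding D_def by blast+
  have eq: "rhs_solution D0 G b \<rho> s = D s" if "s \<in> {b..\<rho>}" for s
    using D(2)[of b] that by (auto simp: rhs_solution_def D_def[symmetric])
  show "continuous_on {b..\<rho>} (rhs_solution D0 G b \<rho>)"
    using D(1) eq continuous_on_cong by blast
  show "rhs_solution D0 G b \<rho> s = D0 + integral {b..s} (\<lambda>r. G r (rhs_solution D0 G b \<rho> r))"
    if s: "s \<in> {b..\<rho>}"
  proof -
    have "integral {b..s} (\<lambda>r. G r (rhs_solution D0 G b \<rho> r)) = integral {b..s} (\<lambda>r. G r (D r))"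
      using eq s by (intro integral_cong) auto
    then show ?thesis using D(2) eq s by simp
  qed
qed

text \<open>The maximum of \<open>\<phi> r exp (-2 L (r - b))\<close> is at most half of itself.\<close>

lemma gronwall_zero:
  fixes \<phi> :: "real \<Rightarrow> real"
  assumes L: "L > 0" and \<phi>_cont: "continuous_on {b..\<rho>} \<phi>" and \<phi>_nonneg: "\<And>r. r \<in> {b..\<rho>} \<Longrightarrow> \<phi> r \<ge> 0"
    and \<phi>_le: "\<And>s. s \<in> {b..\<rho>} \<Longrightarrow> \<phi> s \<le> L * integral {b..s} \<phi>"
    and s: "s \<in> {b..\<rho>}"
  shows "\<phi> s = 0"
proof -
  define \<psi> where "\<psi> r = \<phi> r * exp (- (2 * L * (r - b)))" for r
  have \<phi>_eq: "\<phi> r = \<psi> r * exp (2 * L * (r - b))" for r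
    by (simp add: \<psi>_def mult.assoc flip: exp_add)
  have "continuous_on {b..\<rho>} \<psi>" unfolding \<psi>_def using \<phi>_cont by (intro continuous_intros)
  then obtain x where x: "x \<in> {b..\<rho>}" and x_max: "\<And>r. r \<in> {b..\<rho>} \<Longrightarrow> \<psi> r \<le> \<psi> x"
    using continuous_attains_sup[of "{b..\<rho>}" \<psi>] s by fastforce
  have "\<phi> x \<le> \<psi> x / 2 * exp (2 * L * (x - b))"
  proof -
    have "\<phi> integrable_on {b..x}"
      using x by (intro integrable_continuous_real continuous_on_subset[OF \<phi>_cont]) auto
    then have "\<bar>integral {b..x} (\<lambda>r. L * \<phi> r)\<bar> \<le> \<psi> x / 2 * exp (2 * L * (x - b))"
    proof (intro integral_exp_weight_bound)
      fix r assume "r \<in> {b..x}"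
      then have r: "r \<in> {b..\<rho>}" using x by auto
      show "\<bar>L * \<phi> r\<bar> \<le> L * \<psi> x * exp (2 * L * (r - b))"
        using \<phi>_nonneg[OF r] x_max[OF r] L by (simp add: \<phi>_eq)
    qed (use x L in auto)
    then show ?thesis using \<phi>_le[OF x] by simp
  qed
  then have "\<psi> x \<le> 0" by (simp add: \<phi>_eq mult_le_0_iff)
  then have "\<psi> s \<le> 0" using x_max[OF s] by simp
  then have "\<phi> s \<le> 0" by (simp add: \<phi>_eq mult_le_0_iff)
  then show ?thesis using \<phi>_nonneg[OF s] by linarith
qed

lemma last_zero_before:
  fixes D :: "real \<Rightarrow> real"
  assumes "b \<le> s" and D_cont: "continuous_on {b..s} D" and "D b \<le> 0" "D s > 0"
  obtains s0 where "s0 \<in> {b..s}" "D s0 = 0" "\<And>r. r \<in> {s0..s} \<Longrightarrow> D r \<ge> 0"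
proof -
  define S where "S = {b..s} \<inter> D -` {..0}"
  have "b \<in> S" using \<open>b \<le> s\<close> \<open>D b \<le> 0\<close> by (simp add: S_def)
  moreover have "closed S"
    unfolding S_def by (rule continuous_closed_preimage[OF D_cont closed_atLeastAtMost closed_atMost])
  moreover have "bdd_above S" by (rule bdd_aboveI[of _ s]) (simp add: S_def)
  ultimately have "Sup S \<in> S" and Sup_ge: "\<And>r. r \<in> S \<Longrightarrow> r \<le> Sup S"
    by (auto intro: closed_contains_Sup cSup_upper)
  then have "Sup S \<in> {b..s}" "D (Sup S) \<le> 0" by (simp_all add: S_def)
  then obtain z where z: "Sup S \<le> z" "z \<le> s" "D z = 0"
    using IVT'[of D "Sup S" 0 s] \<open>D s > 0\<close> continuous_on_subset[OF D_cont] by fastforce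
  then have "z \<in> S" using \<open>Sup S \<in> {b..s}\<close> by (simp add: S_def)
  then have "z = Sup S" using Sup_ge z(1) by fastforce
  show thesis
  proof (rule that)
    show "z \<in> {b..s}" using \<open>z \<in> S\<close> by (simp add: S_def)
    show "D z = 0" by fact
    fix r assume r: "r \<in> {z..s}"
    show "D r \<ge> 0"
    proof (rule ccontr)
      assume "\<not> D r \<ge> 0"
      then have "r \<in> S" using r \<open>z \<in> {b..s}\<close> by (simp add: S_def)
      then show False using Sup_ge[of r] \<open>z = Sup S\<close> r z(3) \<open>\<not> D r \<ge> 0\<close> by force
    qed
  qed
qed

text \<open>Integrate the equation over the last excursion of \<open>D\<close> above 0.\<close>

lemma lipschitz_rhs_positive_part_le:
  assumes G: "lipschitz_rhs G L b \<rho>" and D_cont: "continuous_on {b..\<rho>} D"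
    and D_eq: "\<And>s. s \<in> {b..\<rho>} \<Longrightarrow> D s = D0 + integral {b..s} (\<lambda>r. G r (D r))"
    and "D0 \<le> 0" and s: "s \<in> {b..\<rho>}"
  shows "max (D s) 0 \<le> L * integral {b..s} (\<lambda>r. max (D r) 0)"
proof -
  have L: "L > 0" and lip: "\<And>r v w. r \<in> {b..\<rho>} \<Longrightarrow> \<bar>G r v - G r w\<bar> \<le> L * \<bar>v - w\<bar>"
    and G0: "\<And>r. r \<in> {b..\<rho>} \<Longrightarrow> G r 0 = 0"
    using G unfolding lipschitz_rhs_def by auto
  define \<phi> where "\<phi> r = max (D r) 0" for r
  have \<phi>_int: "\<phi> integrable_on {b'..s}" if "b \<le> b'" for b'
    unfolding \<phi>_def using that s
    by (intro integrable_continuous_real continuous_on_subset[OF D_cont] continuous_intros) auto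
  have \<phi>_eq: "(\<lambda>r. max (D r) 0) = \<phi>" by (simp add: fun_eq_iff \<phi>_def)
  have "max (D s) 0 \<le> L * integral {b..s} \<phi>"
  proof (cases "D s \<le> 0")
    case True
    then show ?thesis using integral_nonneg[OF \<phi>_int[OF order_refl]] L by (simp add: \<phi>_def)
  next
    case False
    have "D b \<le> 0" using D_eq[of b] s \<open>D0 \<le> 0\<close> by auto
    then obtain s0 where s0: "s0 \<in> {b..s}" "D s0 = 0" and D_nonneg: "\<And>r. r \<in> {s0..s} \<Longrightarrow> D r \<ge> 0"
      using last_zero_before[of b s D] continuous_on_subset[OF D_cont] False s by auto
    have G_int: "(\<lambda>r. G r (D r)) integrable_on {b..s}" by (rule lipschitz_rhs_integrable_on[OF G D_cont s])
    have "integral {b..s0} (\<lambda>r. G r (D r)) + integral {s0..s} (\<lambda>r. G r (D r))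
        = integral {b..s} (\<lambda>r. G r (D r))"
      using s0 G_int by (intro Henstock_Kurzweil_Integration.integral_combine) auto
    then have "D s = D s0 + integral {s0..s} (\<lambda>r. G r (D r))"
      using D_eq[of s] D_eq[of s0] s s0 by auto
    also have "\<dots> = integral {s0..s} (\<lambda>r. G r (D r))" using \<open>D s0 = 0\<close> by simp
    also have "\<dots> \<le> integral {s0..s} (\<lambda>r. L * \<phi> r)"
    proof (rule integral_le)
      show "(\<lambda>r. G r (D r)) integrable_on {s0..s}"
        using integrable_subinterval_real[OF G_int] s0 by auto
      show "(\<lambda>r. L * \<phi> r) integrable_on {s0..s}"
        using \<phi>_int[of s0] s0 L by (subst integrable_on_cmult_iff) auto
      fix r assume r: "r \<in> {s0..s}"
      then have "r \<in> {b..\<rho>}" using s s0 by auto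
      then show "G r (D r) \<le> L * \<phi> r"
        using lip[of r "D r" 0] G0[of r] D_nonneg[OF r] by (simp add: \<phi>_def)
    qed
    also have "\<dots> \<le> L * integral {b..s} \<phi>"
    proof -
      have "integral {b..s0} \<phi> + integral {s0..s} \<phi> = integral {b..s} \<phi>"
        using s0 \<phi>_int[OF order_refl] by (intro Henstock_Kurzweil_Integration.integral_combine) auto
      moreover have "integral {b..s0} \<phi> \<ge> 0"
        using s0 integrable_subinterval_real[OF \<phi>_int[OF order_refl]]
        by (intro integral_nonneg) (auto simp: \<phi>_def)
      ultimately show ?thesis using L by simp
    qed
    finally show ?thesis using False by (simp add: \<phi>_def)
  qed
  then show ?thesis unfolding \<phi>_eq .
qed

lemma rhs_solution_nonpos:
  assumes G: "lipschitz_rhs G L b \<rho>" and "D0 \<le> 0" and s: "s \<in> {b..\<rho>}"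
  shows "rhs_solution D0 G b \<rho> s \<le> 0"
proof -
  define D where "D = rhs_solution D0 G b \<rho>"
  have D_cont: "continuous_on {b..\<rho>} D" and D_eq: "\<And>s. s \<in> {b..\<rho>} \<Longrightarrow> D s = D0 + integral {b..s} (\<lambda>r. G r (D r))"
    using rhs_solution_solves[OF G] unfolding D_def by auto
  have "max (D s) 0 = 0"
  proof (rule gronwall_zero[where \<phi>="\<lambda>r. max (D r) 0", OF _ _ _ _ s])
    show "L > 0" using G by (simp add: lipschitz_rhs_def)
    show "continuous_on {b..\<rho>} (\<lambda>r. max (D r) 0)" using D_cont by (intro continuous_intros)
    show "\<And>s. s \<in> {b..\<rho>} \<Longrightarrow> max (D s) 0 \<le> L * integral {b..s} (\<lambda>r. max (D r) 0)"
      by (rule lipschitz_rhs_positive_part_le[OF G D_cont D_eq \<open>D0 \<le> 0\<close>])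
  qed simp
  then show ?thesis by (simp add: D_def)
qed

lemma set_integral_shifted_drift:
  fixes f :: "real \<Rightarrow> real \<Rightarrow> real"
  assumes G: "lipschitz_rhs (\<lambda>r v. f r (y r + v) - f r (y r)) L b \<rho>"
    and f_int: "set_integrable lborel {b..\<rho>} (\<lambda>r. f r (y r))"
    and D: "continuous_on {b..\<rho>} D"
  shows "set_integrable lborel {b..\<rho>} (\<lambda>r. f r (y r + D r))"
    and "s \<in> {b..\<rho>} \<Longrightarrow> (LINT r:{b..s}|lborel. f r (y r + D r))
      = (LINT r:{b..s}|lborel. f r (y r)) + integral {b..s} (\<lambda>r. f r (y r + D r) - f r (y r))"
proof -
  have incr_int: "set_integrable lborel {b..\<rho>} (\<lambda>r. f r (y r + D r) - f r (y r))"
    using lipschitz_rhs_set_integrable[OF G D] .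
  show "set_integrable lborel {b..\<rho>} (\<lambda>r. f r (y r + D r))"
    using set_integral_add(1)[OF f_int incr_int] by simp
  assume "s \<in> {b..\<rho>}"
  then have sub: "{b..s} \<subseteq> {b..\<rho>}" by auto
  note f_int_s = set_integrable_subset[OF f_int _ sub] and incr_int_s = set_integrable_subset[OF incr_int _ sub]
  have "(LINT r:{b..s}|lborel. f r (y r + D r))
      = (LINT r:{b..s}|lborel. f r (y r) + (f r (y r + D r) - f r (y r)))" by simp
  also have "\<dots> = (LINT r:{b..s}|lborel. f r (y r)) + (LINT r:{b..s}|lborel. f r (y r + D r) - f r (y r))"
    using set_integral_add(2)[OF f_int_s incr_int_s] by simp
  finally show "(LINT r:{b..s}|lborel. f r (y r + D r))
      = (LINT r:{b..s}|lborel. f r (y r)) + integral {b..s} (\<lambda>r. f r (y r + D r) - f r (y r))"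
    using set_borel_integral_eq_integral(2)[OF incr_int_s] by simp
qed

section \<open>The branching structure along a sample path\<close>

lemma first_atom_SomeD:
  assumes "finite S" and "first_atom S b u = Some (\<tau>, k)"
  shows "(\<tau>, k) \<in> S" "b < \<tau>" "\<tau> \<le> u"
proof -
  define W where "W = {p \<in> S. b < fst p \<and> fst p \<le> u}"
  have "W \<noteq> {}" using assms(2) unfolding W_def first_atom_def by (auto split: if_splits)
  moreover have "finite W" using assms(1) unfolding W_def by simp
  ultimately have "Min (fst ` W) \<in> fst ` W" by simp
  define r0 where "r0 = Min (fst ` W)"
  obtain k0 where "(r0, k0) \<in> W" using \<open>Min (fst ` W) \<in> fst ` W\<close> unfolding r0_def by auto
  moreover have "r0 \<le> r'" if "(r', k') \<in> S" "b < r'" "r' \<le> u" for r' k'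
    using \<open>finite W\<close> that unfolding r0_def by (intro Min_le) (auto simp: W_def image_iff)
  ultimately have "\<exists>p. (case p of (r, k) \<Rightarrow> (r, k) \<in> S \<and> b < r \<and> r \<le> u \<and>
      (\<forall>r' k'. (r', k') \<in> S \<and> b < r' \<and> r' \<le> u \<longrightarrow> r \<le> r'))"
    by (intro exI[of _ "(r0, k0)"]) (auto simp: W_def)
  from someI_ex[OF this] assms(2) show "(\<tau>, k) \<in> S" "b < \<tau>" "\<tau> \<le> u"
    unfolding first_atom_def by (auto split: if_splits)
qed

lemma birth_snoc:
  "birth V t T q (p @ [c]) = (if p @ [c] \<in> V then Some t else
     (case birth V t T q p of None \<Rightarrow> None
      | Some b \<Rightarrow> (case first_atom (q p) b T of None \<Rightarrow> None
                    | Some (\<tau>, k) \<Rightarrow> (if c < k then Some \<tau> else None))))"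
  by (simp add: birth_def cong: option.case_cong)

lemma birth_root: "i \<in> V \<Longrightarrow> birth V t T q i = Some t"
  by (cases i rule: rev_cases) (simp_all add: birth_def)

lemma birth_not_root:
  assumes fin: "\<And>l. finite (q l)" and "birth V t T q i = Some b" "i \<notin> V"
  obtains p c b' where "i = p @ [c]" "birth V t T q p = Some b'" "b' < b" "stop_time V t T q p = b"
proof (cases i rule: rev_cases)
  case Nil
  then show thesis using assms(2,3) by (simp add: birth_def split: if_splits)
next
  case (snoc p c)
  then obtain b' k where "birth V t T q p = Some b'" "first_atom (q p) b' T = Some (b, k)"
    using assms(2,3) by (auto simp: birth_snoc split: option.splits if_splits)
  then show thesis
    using that[OF snoc] first_atom_SomeD[OF fin] by (simp add: stop_time_def)
qed

lemma stop_time_le: "(\<And>l. finite (q l)) \<Longrightarrow> stop_time V t T q i \<le> T"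
  by (auto simp: stop_time_def dest: first_atom_SomeD split: option.splits)

lemma birth_stop_time_bounds:
  assumes t: "t \<in> {0..T}" and fin: "\<And>l. finite (q l)" and b: "birth V t T q i = Some b"
  shows "0 \<le> b" "b \<le> stop_time V t T q i"
proof -
  have "0 \<le> b \<and> b \<le> T" using b
  proof (induction i arbitrary: b rule: rev_induct)
    case (snoc c p)
    show ?case
    proof (cases "p @ [c] \<in> V")
      case True
      then show ?thesis using snoc.prems t by (simp add: birth_root)
    next
      case False
      then obtain b' where "birth V t T q p = Some b'" "b' < b" "stop_time V t T q p = b"
        using birth_not_root[OF fin snoc.prems] by (metis butlast_snoc)
      then show ?thesis using snoc.IH stop_time_le[OF fin] by force
    qed
  qed (use t in \<open>auto simp: birth_def split: if_splits\<close>)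
  then show "0 \<le> b" by simp
  show "b \<le> stop_time V t T q i"
  proof (cases "first_atom (q i) b T")
    case (Some a)
    then obtain \<tau> k where "first_atom (q i) b T = Some (\<tau>, k)" by (cases a) auto
    then show ?thesis using b first_atom_SomeD(2)[OF fin] by (force simp: stop_time_def)
  qed (use b \<open>0 \<le> b \<and> b \<le> T\<close> in \<open>simp add: stop_time_def\<close>)
qed

text \<open>The pathwise increment \<open>Y' - Y\<close> between the solutions from two initial values: on the
  lifetime of each particle it solves the increment equation, started at \<open>d\<close> for the initial
  particles and at the parent's value at the branching time for offspring.\<close>

fun shift_incr_rev :: "label set \<Rightarrow> real \<Rightarrow> real \<Rightarrow> (label \<Rightarrow> (real \<times> nat) set)
    \<Rightarrow> (label \<Rightarrow> real \<Rightarrow> real \<Rightarrow> real) \<Rightarrow> real \<Rightarrow> label \<Rightarrow> real \<Rightarrow> real" where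
  "shift_incr_rev V t T q G d [] = rhs_solution d (G []) t (stop_time V t T q [])"
| "shift_incr_rev V t T q G d (c # r) =
     (let i = rev (c # r); b = the (birth V t T q i)
      in rhs_solution (if i \<in> V then d else shift_incr_rev V t T q G d r b) (G i) b (stop_time V t T q i))"

definition shift_incr :: "label set \<Rightarrow> real \<Rightarrow> real \<Rightarrow> (label \<Rightarrow> (real \<times> nat) set)
    \<Rightarrow> (label \<Rightarrow> real \<Rightarrow> real \<Rightarrow> real) \<Rightarrow> real \<Rightarrow> label \<Rightarrow> real \<Rightarrow> real" where
  "shift_incr V t T q G d i = shift_incr_rev V t T q G d (rev i)"

lemma shift_incr_root:
  "i \<in> V \<Longrightarrow> shift_incr V t T q G d i = rhs_solution d (G i) t (stop_time V t T q i)"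
  by (cases i rule: rev_cases) (auto simp: shift_incr_def birth_root Let_def)

lemma shift_incr_child:
  "p @ [c] \<notin> V \<Longrightarrow> birth V t T q (p @ [c]) = Some b \<Longrightarrow>
    shift_incr V t T q G d (p @ [c]) =
      rhs_solution (shift_incr V t T q G d p b) (G (p @ [c])) b (stop_time V t T q (p @ [c]))"
  by (simp add: shift_incr_def Let_def)

lemma shift_incr_root_before: "i \<in> V \<Longrightarrow> s \<le> t \<Longrightarrow> shift_incr V t T q G d i s = d"
  by (simp add: shift_incr_root rhs_solution_before)

lemma shift_incr_child_at_birth:
  "p @ [c] \<notin> V \<Longrightarrow> birth V t T q (p @ [c]) = Some b \<Longrightarrow>
    shift_incr V t T q G d (p @ [c]) b = shift_incr V t T q G d p b"
  by (simp add: shift_incr_child rhs_solution_before)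

lemma shift_incr_eq_rhs_solution:
  assumes "\<And>l. finite (q l)" and "birth V t T q i = Some b"
  obtains D0 where "shift_incr V t T q G d i = rhs_solution D0 (G i) b (stop_time V t T q i)"
proof (cases "i \<in> V")
  case True
  then show thesis using that assms(2) by (simp add: shift_incr_root birth_root)
next
  case False
  then obtain p c where "i = p @ [c]"
    using birth_not_root[OF assms] by metis
  then show thesis using that shift_incr_child False assms(2) by blast
qed

lemma shift_incr_solves:
  assumes fin: "\<And>l. finite (q l)" and b: "birth V t T q i = Some b"
    and G: "lipschitz_rhs (G i) L b (stop_time V t T q i)"
  shows "continuous_on {b..stop_time V t T q i} (shift_incr V t T q G d i)"
    and "s \<in> {b..stop_time V t T q i} \<Longrightarrow> shift_incr V t T q G d i s
      = shift_incr V t T q G d i b + integral {b..s} (\<lambda>r. G i r (shift_incr V t T q G d i r))"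
proof -
  obtain D0 where eq: "shift_incr V t T q G d i = rhs_solution D0 (G i) b (stop_time V t T q i)"
    using shift_incr_eq_rhs_solution[OF fin b] .
  show "continuous_on {b..stop_time V t T q i} (shift_incr V t T q G d i)"
    unfolding eq by (rule rhs_solution_solves(1)[OF G])
  show "shift_incr V t T q G d i s
      = shift_incr V t T q G d i b + integral {b..s} (\<lambda>r. G i r (shift_incr V t T q G d i r))"
    if "s \<in> {b..stop_time V t T q i}"
    unfolding eq using rhs_solution_solves(2)[OF G that] by (simp add: rhs_solution_before)
qed

lemma shift_incr_nonpos:
  assumes fin: "\<And>l. finite (q l)" and "d \<le> 0"
    and G: "\<And>i b. birth V t T q i = Some b \<Longrightarrow> lipschitz_rhs (G i) L b (stop_time V t T q i)"
  shows "birth V t T q i = Some b \<Longrightarrow> s \<in> {b..stop_time V t T q i} \<Longrightarrow> shift_incr V t T q G d i s \<le> 0"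
proof (induction i arbitrary: b s rule: rev_induct)
  case Nil
  then have "[] \<in> V" by (simp add: birth_def split: if_splits)
  then show ?case
    using Nil rhs_solution_nonpos[OF G \<open>d \<le> 0\<close>] by (simp add: shift_incr_root birth_root)
next
  case (snoc c p)
  show ?case
  proof (cases "p @ [c] \<in> V")
    case True
    then show ?thesis
      using snoc.prems rhs_solution_nonpos[OF G \<open>d \<le> 0\<close>] by (simp add: shift_incr_root birth_root)
  next
    case False
    then obtain b' where "birth V t T q p = Some b'" "b' < b" "stop_time V t T q p = b"
      using birth_not_root[OF fin snoc.prems(1)] by (metis butlast_snoc)
    then have "shift_incr V t T q G d p b \<le> 0" by (intro snoc.IH) auto
    then show ?thesis
      using snoc.prems False rhs_solution_nonpos[OF G] by (simp add: shift_incr_child)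
  qed
qed

section \<open>Shifting the initial value of Y\<close>

lemma continuous_on_integral_eq:
  fixes f :: "real \<Rightarrow> 'v::euclidean_space"
  assumes f: "set_integrable lborel {b..\<rho>} f" and h: "continuous_on {b..\<rho>} h"
    and z: "\<And>s. s \<in> {b..\<rho>} \<Longrightarrow> z s = c + (LINT r:{b..s}|lborel. f r) + h s"
  shows "continuous_on {b..\<rho>} z"
proof -
  have z_eq: "z s = c + integral {b..s} f + h s" if s: "s \<in> {b..\<rho>}" for s
  proof -
    have "set_integrable lborel {b..s} f" using s by (intro set_integrable_subset[OF f]) auto
    then show ?thesis using z[OF s] by (simp add: set_borel_integral_eq_integral(2))
  qed
  have "continuous_on {b..\<rho>} (\<lambda>s. c + integral {b..s} f + h s)"
    using indefinite_integral_continuous_1[OF set_borel_integral_eq_integral(1)[OF f]] h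
    by (intro continuous_on_add continuous_on_const)
  then show ?thesis by (subst continuous_on_cong[OF refl z_eq])
qed

lemma progressive_section_measurable:
  assumes "progressive F T a" "T \<ge> 0" "\<omega> \<in> space (F T)" "I \<subseteq> {0..T}"
  shows "(\<lambda>s. a s \<omega>) \<in> restrict_space borel I \<rightarrow>\<^sub>M borel"
proof -
  have "(\<lambda>(s, \<omega>). a s \<omega>) \<in> borel_measurable (restrict_space borel {0..T} \<Otimes>\<^sub>M F T)"
    using assms(1,2) unfolding progressive_def by auto
  from measurable_Pair1[OF this assms(3)] show ?thesis
    by (intro measurable_restrict_mono[OF _ assms(4)]) simp
qed

lemma measurable_compose3_restrict:
  fixes h :: "'x::second_countable_topology \<Rightarrow> 'y::second_countable_topology \<Rightarrow> 'z::second_countable_topology \<Rightarrow> real"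
  assumes h: "(\<lambda>(x, y, z). h x y z) \<in> borel_measurable borel"
    and "continuous_on I f" "continuous_on I g" "e \<in> restrict_space borel I \<rightarrow>\<^sub>M borel"
  shows "(\<lambda>r. h (f r) (g r) (e r)) \<in> borel_measurable (restrict_space borel I)"
proof -
  have "(\<lambda>r. (f r, g r, e r)) \<in> borel_measurable (restrict_space borel I)"
    using borel_measurable_continuous_on_restrict[OF assms(2)] borel_measurable_continuous_on_restrict[OF assms(3)]
      assms(4) by (intro borel_measurable_Pair)
  from measurable_compose[OF this h] show ?thesis by simp
qed

definition particle_ito_integrals :: "'w measure \<Rightarrow> (real \<Rightarrow> 'w measure) \<Rightarrow> real
   \<Rightarrow> (label \<Rightarrow> real \<Rightarrow> 'w \<Rightarrow> real^'m) \<Rightarrow> (label \<Rightarrow> 'w \<Rightarrow> (real \<times> nat) set)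
   \<Rightarrow> (real^'d \<Rightarrow> 'a \<Rightarrow> real^'m^'d) \<Rightarrow> (real^'d \<Rightarrow> 'a \<Rightarrow> real^'m)
   \<Rightarrow> (label \<Rightarrow> real \<Rightarrow> 'w \<Rightarrow> 'a) \<Rightarrow> real \<Rightarrow> label set \<Rightarrow> (label \<Rightarrow> real \<Rightarrow> 'w \<Rightarrow> real^'d) \<Rightarrow> label
   \<Rightarrow> ('d \<Rightarrow> 'm \<Rightarrow> real \<Rightarrow> 'w \<Rightarrow> real) \<Rightarrow> ('m \<Rightarrow> real \<Rightarrow> 'w \<Rightarrow> real) \<Rightarrow> bool" where
  "particle_ito_integrals M F T B Q sig sigY \<alpha> t V X i I J \<longleftrightarrow>
     (\<forall>j k. is_ito M F T (\<lambda>s \<omega>. B i s \<omega> $ k)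
        (\<lambda>r \<omega>. if active V t T (\<lambda>l. Q l \<omega>) i r then sig (X i r \<omega>) (\<alpha> i r \<omega>) $ j $ k else 0) (I j k)) \<and>
     (\<forall>k. is_ito M F T (\<lambda>s \<omega>. B i s \<omega> $ k)
        (\<lambda>r \<omega>. if active V t T (\<lambda>l. Q l \<omega>) i r then sigY (X i r \<omega>) (\<alpha> i r \<omega>) $ k else 0) (J k))"

definition particle_dynamics :: "real \<Rightarrow> (label \<Rightarrow> 'w \<Rightarrow> (real \<times> nat) set)
   \<Rightarrow> (real^'d \<Rightarrow> 'a \<Rightarrow> real^'d) \<Rightarrow> (real^'d \<Rightarrow> real \<Rightarrow> 'a \<Rightarrow> real) \<Rightarrow> (label \<Rightarrow> real \<Rightarrow> 'w \<Rightarrow> 'a)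
   \<Rightarrow> real \<Rightarrow> label set \<Rightarrow> (label \<Rightarrow> real \<Rightarrow> 'w \<Rightarrow> real^'d) \<Rightarrow> (label \<Rightarrow> real \<Rightarrow> 'w \<Rightarrow> real) \<Rightarrow> label
   \<Rightarrow> ('d \<Rightarrow> 'm \<Rightarrow> real \<Rightarrow> 'w \<Rightarrow> real) \<Rightarrow> ('m \<Rightarrow> real \<Rightarrow> 'w \<Rightarrow> real) \<Rightarrow> 'w \<Rightarrow> bool" where
  "particle_dynamics T Q lam lamY \<alpha> t V X Y i I J \<omega> \<longleftrightarrow>
     (\<forall>b. birth V t T (\<lambda>l. Q l \<omega>) i = Some b \<longrightarrow>
        (let \<rho> = stop_time V t T (\<lambda>l. Q l \<omega>) i in
         set_integrable lborel {b..\<rho>} (\<lambda>r. lam (X i r \<omega>) (\<alpha> i r \<omega>)) \<and>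
         set_integrable lborel {b..\<rho>} (\<lambda>r. lamY (X i r \<omega>) (Y i r \<omega>) (\<alpha> i r \<omega>)) \<and>
         (\<forall>s\<in>{b..\<rho>}.
            X i s \<omega> = X i b \<omega> + set_lebesgue_integral lborel {b..s} (\<lambda>r. lam (X i r \<omega>) (\<alpha> i r \<omega>))
               + (\<chi> j. \<Sum>k\<in>UNIV. I j k s \<omega> - I j k b \<omega>) \<and>
            Y i s \<omega> = Y i b \<omega> + set_lebesgue_integral lborel {b..s} (\<lambda>r. lamY (X i r \<omega>) (Y i r \<omega>) (\<alpha> i r \<omega>))
               + (\<Sum>k\<in>UNIV. J k s \<omega> - J k b \<omega>))))"

lemma branching_sol_iff:
  "branching_sol M F T B Q lam sig lamY sigY \<alpha> t V x y X Y \<longleftrightarrow>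
     (AE \<omega> in M. \<forall>i\<in>V. \<forall>s\<in>{0..t}. X i s \<omega> = x i \<and> Y i s \<omega> = y) \<and>
     (AE \<omega> in M. \<forall>i c b. i @ [c] \<notin> V \<longrightarrow> birth V t T (\<lambda>j. Q j \<omega>) (i @ [c]) = Some b \<longrightarrow>
         X (i @ [c]) b \<omega> = X i b \<omega> \<and> Y (i @ [c]) b \<omega> = Y i b \<omega>) \<and>
     (\<forall>i. \<exists>I J. particle_ito_integrals M F T B Q sig sigY \<alpha> t V X i I J \<and>
        (AE \<omega> in M. particle_dynamics T Q lam lamY \<alpha> t V X Y i I J \<omega>))"
  unfolding branching_sol_def particle_ito_integrals_def particle_dynamics_def by simp

definition drift_incr :: "(real^'d \<Rightarrow> real \<Rightarrow> 'a \<Rightarrow> real) \<Rightarrow> (label \<Rightarrow> real \<Rightarrow> 'w \<Rightarrow> real^'d)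
    \<Rightarrow> (label \<Rightarrow> real \<Rightarrow> 'w \<Rightarrow> real) \<Rightarrow> (label \<Rightarrow> real \<Rightarrow> 'w \<Rightarrow> 'a) \<Rightarrow> 'w \<Rightarrow> label \<Rightarrow> real \<Rightarrow> real \<Rightarrow> real" where
  "drift_incr lamY X Y \<alpha> \<omega> i r v = lamY (X i r \<omega>) (Y i r \<omega> + v) (\<alpha> i r \<omega>) - lamY (X i r \<omega>) (Y i r \<omega>) (\<alpha> i r \<omega>)"

lemma particle_dynamics_lipschitz_rhs:
  fixes lamY :: "real^'d \<Rightarrow> real \<Rightarrow> 'a::polish_space \<Rightarrow> real"
  assumes meas_lamY: "(\<lambda>(z, v, a). lamY z v a) \<in> borel_measurable borel"
    and lip: "\<And>z v v' a. \<bar>lamY z v a - lamY z v' a\<bar> \<le> L * \<bar>v - v'\<bar>" and "L > 0"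
    and dyn: "particle_dynamics T Q lam lamY \<alpha> t V X Y i I J \<omega>"
    and I_cont: "\<And>j k. continuous_on {0..T} (\<lambda>s. I j k s \<omega>)"
    and J_cont: "\<And>k. continuous_on {0..T} (\<lambda>s. J k s \<omega>)"
    and \<alpha>_meas: "\<And>I. I \<subseteq> {0..T} \<Longrightarrow> (\<lambda>s. \<alpha> i s \<omega>) \<in> restrict_space borel I \<rightarrow>\<^sub>M borel"
    and t: "t \<in> {0..T}" and fin: "\<And>l. finite (Q l \<omega>)"
    and b: "birth V t T (\<lambda>l. Q l \<omega>) i = Some b"
  shows "lipschitz_rhs (drift_incr lamY X Y \<alpha> \<omega> i) L b (stop_time V t T (\<lambda>l. Q l \<omega>) i)"
proof -
  define \<rho> where "\<rho> = stop_time V t T (\<lambda>l. Q l \<omega>) i"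
  have sub: "{b..\<rho>} \<subseteq> {0..T}"
    using birth_stop_time_bounds[OF t fin b] stop_time_le[OF fin] unfolding \<rho>_def by auto
  have X_eq: "\<And>s. s \<in> {b..\<rho>} \<Longrightarrow> X i s \<omega> = X i b \<omega>
      + (LINT r:{b..s}|lborel. lam (X i r \<omega>) (\<alpha> i r \<omega>)) + (\<chi> j. \<Sum>k\<in>UNIV. I j k s \<omega> - I j k b \<omega>)"
    and Y_eq: "\<And>s. s \<in> {b..\<rho>} \<Longrightarrow> Y i s \<omega> = Y i b \<omega>
      + (LINT r:{b..s}|lborel. lamY (X i r \<omega>) (Y i r \<omega>) (\<alpha> i r \<omega>)) + (\<Sum>k\<in>UNIV. J k s \<omega> - J k b \<omega>)"
    and lam_int: "set_integrable lborel {b..\<rho>} (\<lambda>r. lam (X i r \<omega>) (\<alpha> i r \<omega>))"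
    and lamY_int: "set_integrable lborel {b..\<rho>} (\<lambda>r. lamY (X i r \<omega>) (Y i r \<omega>) (\<alpha> i r \<omega>))"
    using dyn b unfolding particle_dynamics_def Let_def \<rho>_def by blast+
  have X_cont: "continuous_on {b..\<rho>} (\<lambda>s. X i s \<omega>)"
    using continuous_on_subset[OF I_cont sub]
    by (intro continuous_on_integral_eq[OF lam_int _ X_eq] continuous_intros continuous_on_vec_lambda)
  have Y_cont: "continuous_on {b..\<rho>} (\<lambda>s. Y i s \<omega>)"
    using continuous_on_subset[OF J_cont sub]
    by (intro continuous_on_integral_eq[OF lamY_int _ Y_eq] continuous_intros)
  show ?thesis
    unfolding lipschitz_rhs_def \<rho>_def[symmetric]
  proof (intro conjI ballI allI impI)
    show "L > 0" by fact
  next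
    fix r v w
    show "\<bar>drift_incr lamY X Y \<alpha> \<omega> i r v - drift_incr lamY X Y \<alpha> \<omega> i r w\<bar> \<le> L * \<bar>v - w\<bar>"
      using lip[of "X i r \<omega>" "Y i r \<omega> + v" "\<alpha> i r \<omega>" "Y i r \<omega> + w"] by (simp add: drift_incr_def)
  next
    fix r show "drift_incr lamY X Y \<alpha> \<omega> i r 0 = 0" by (simp add: drift_incr_def)
  next
    fix u :: "real \<Rightarrow> real" assume "continuous_on {b..\<rho>} u"
    then have "continuous_on {b..\<rho>} (\<lambda>r. Y i r \<omega> + u r)" by (intro continuous_on_add Y_cont)
    then show "(\<lambda>r. drift_incr lamY X Y \<alpha> \<omega> i r (u r)) \<in> borel_measurable (restrict_space borel {b..\<rho>})"
      unfolding drift_incr_def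
      by (intro borel_measurable_diff measurable_compose3_restrict[OF meas_lamY X_cont _ \<alpha>_meas[OF sub]] Y_cont)
  qed
qed

lemma particle_dynamics_shift:
  assumes dyn: "particle_dynamics T Q lam lamY \<alpha> t V X Y i I J \<omega>"
    and Y2: "\<And>s. Y2 i s \<omega> = Y i s \<omega> + D s"
    and D: "\<And>b. birth V t T (\<lambda>l. Q l \<omega>) i = Some b \<Longrightarrow>
      lipschitz_rhs (drift_incr lamY X Y \<alpha> \<omega> i) L b (stop_time V t T (\<lambda>l. Q l \<omega>) i) \<and>
      continuous_on {b..stop_time V t T (\<lambda>l. Q l \<omega>) i} D \<and>
      (\<forall>s\<in>{b..stop_time V t T (\<lambda>l. Q l \<omega>) i}. D s = D b + integral {b..s} (\<lambda>r. drift_incr lamY X Y \<alpha> \<omega> i r (D r)))"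
  shows "particle_dynamics T Q lam lamY \<alpha> t V X Y2 i I J \<omega>"
  unfolding particle_dynamics_def Let_def
proof (intro allI impI)
  fix b assume b: "birth V t T (\<lambda>l. Q l \<omega>) i = Some b"
  define \<rho> where "\<rho> = stop_time V t T (\<lambda>l. Q l \<omega>) i"
  note dyn_b = dyn[unfolded particle_dynamics_def Let_def, rule_format, OF b, folded \<rho>_def]
  have "drift_incr lamY X Y \<alpha> \<omega> i
      = (\<lambda>r v. lamY (X i r \<omega>) (Y i r \<omega> + v) (\<alpha> i r \<omega>) - lamY (X i r \<omega>) (Y i r \<omega>) (\<alpha> i r \<omega>))"
    by (simp add: fun_eq_iff drift_incr_def)
  note D_b = D[OF b, folded \<rho>_def, unfolded this]
  have G: "lipschitz_rhs (\<lambda>r v. lamY (X i r \<omega>) (Y i r \<omega> + v) (\<alpha> i r \<omega>) - lamY (X i r \<omega>) (Y i r \<omega>) (\<alpha> i r \<omega>)) L b \<rho>"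
    and D_cont: "continuous_on {b..\<rho>} D"
    using D_b by blast+
  have D_eq: "D s = D b
      + integral {b..s} (\<lambda>r. lamY (X i r \<omega>) (Y i r \<omega> + D r) (\<alpha> i r \<omega>) - lamY (X i r \<omega>) (Y i r \<omega>) (\<alpha> i r \<omega>))"
    if "s \<in> {b..\<rho>}" for s
    using D_b that by blast
  note shifted = set_integral_shifted_drift[where f="\<lambda>r v. lamY (X i r \<omega>) v (\<alpha> i r \<omega>)" and y="\<lambda>r. Y i r \<omega>",
      OF G conjunct1[OF conjunct2[OF dyn_b]] D_cont]
  show "set_integrable lborel {b..\<rho>} (\<lambda>r. lam (X i r \<omega>) (\<alpha> i r \<omega>)) \<and>
    set_integrable lborel {b..\<rho>} (\<lambda>r. lamY (X i r \<omega>) (Y2 i r \<omega>) (\<alpha> i r \<omega>)) \<and>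
    (\<forall>s\<in>{b..\<rho>}.
       X i s \<omega> = X i b \<omega> + (LINT r:{b..s}|lborel. lam (X i r \<omega>) (\<alpha> i r \<omega>))
         + (\<chi> j. \<Sum>k\<in>UNIV. I j k s \<omega> - I j k b \<omega>) \<and>
       Y2 i s \<omega> = Y2 i b \<omega> + (LINT r:{b..s}|lborel. lamY (X i r \<omega>) (Y2 i r \<omega>) (\<alpha> i r \<omega>))
         + (\<Sum>k\<in>UNIV. J k s \<omega> - J k b \<omega>))"
  proof (intro conjI ballI)
    show "set_integrable lborel {b..\<rho>} (\<lambda>r. lam (X i r \<omega>) (\<alpha> i r \<omega>))"
      using dyn_b by (rule conjunct1)
    show "set_integrable lborel {b..\<rho>} (\<lambda>r. lamY (X i r \<omega>) (Y2 i r \<omega>) (\<alpha> i r \<omega>))"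
      using shifted(1) by (simp add: Y2)
  next
    fix s assume s: "s \<in> {b..\<rho>}"
    note eqs_s = bspec[OF conjunct2[OF conjunct2[OF dyn_b]] s]
    show "X i s \<omega> = X i b \<omega> + (LINT r:{b..s}|lborel. lam (X i r \<omega>) (\<alpha> i r \<omega>))
         + (\<chi> j. \<Sum>k\<in>UNIV. I j k s \<omega> - I j k b \<omega>)"
      using eqs_s by (rule conjunct1)
    show "Y2 i s \<omega> = Y2 i b \<omega> + (LINT r:{b..s}|lborel. lamY (X i r \<omega>) (Y2 i r \<omega>) (\<alpha> i r \<omega>))
         + (\<Sum>k\<in>UNIV. J k s \<omega> - J k b \<omega>)"
      using conjunct2[OF eqs_s] D_eq[OF s] shifted(2)[OF s] by (simp add: Y2)
  qed
qed

lemma branching_sol_AE_lipschitz_rhs: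
  fixes lamY :: "real^'d \<Rightarrow> real \<Rightarrow> 'a::polish_space \<Rightarrow> real"
  assumes space: "complete_filtered_ps M F"
    and meas_lamY: "(\<lambda>(z, v, a). lamY z v a) \<in> borel_measurable borel"
    and lip: "\<And>z v v' a. \<bar>lamY z v a - lamY z v' a\<bar> \<le> L * \<bar>v - v'\<bar>" and "L > 0"
    and t: "t \<in> {0..T}" and fin: "AE \<omega> in M. \<forall>l. finite (Q l \<omega>)"
    and prog: "\<And>i. progressive F T (\<alpha> i)"
    and sol: "branching_sol M F T B Q lam sig lamY sigY \<alpha> t V x y1 X Y"
  shows "AE \<omega> in M. (\<forall>l. finite (Q l \<omega>)) \<and> (\<forall>i b. birth V t T (\<lambda>l. Q l \<omega>) i = Some b \<longrightarrow>
    lipschitz_rhs (drift_incr lamY X Y \<alpha> \<omega> i) L b (stop_time V t T (\<lambda>l. Q l \<omega>) i))"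
proof -
  obtain II JJ where ito: "\<And>i. particle_ito_integrals M F T B Q sig sigY \<alpha> t V X i (II i) (JJ i)"
    and dyn: "\<And>i. AE \<omega> in M. particle_dynamics T Q lam lamY \<alpha> t V X Y i (II i) (JJ i) \<omega>"
    using conjunct2[OF conjunct2[OF sol[unfolded branching_sol_iff]]] by metis
  have "AE \<omega> in M. \<omega> \<in> space M \<and> (\<forall>l. finite (Q l \<omega>)) \<and>
      (\<forall>i j k. continuous_on {0..T} (\<lambda>s. II i j k s \<omega>)) \<and> (\<forall>i k. continuous_on {0..T} (\<lambda>s. JJ i k s \<omega>)) \<and>
      (\<forall>i. particle_dynamics T Q lam lamY \<alpha> t V X Y i (II i) (JJ i) \<omega>)"
    using fin ito dyn by (simp add: AE_all_countable particle_ito_integrals_def is_ito_def)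
  then show ?thesis
  proof eventually_elim
    case (elim \<omega>)
    then have "\<omega> \<in> space (F T)" using space by (simp add: complete_filtered_ps_def)
    then have "(\<lambda>s. \<alpha> i s \<omega>) \<in> restrict_space borel I \<rightarrow>\<^sub>M borel" if "I \<subseteq> {0..T}" for i I
      using t that by (intro progressive_section_measurable[OF prog]) auto
    then show ?case
      using elim meas_lamY lip \<open>L > 0\<close> t
      by (auto intro!: particle_dynamics_lipschitz_rhs[where Q=Q and \<omega>=\<omega> and I="II i" and J="JJ i" and lam=lam for i])
  qed
qed

definition shift_Y :: "(real^'d \<Rightarrow> real \<Rightarrow> 'a \<Rightarrow> real) \<Rightarrow> (label \<Rightarrow> real \<Rightarrow> 'w \<Rightarrow> real^'d)
    \<Rightarrow> (label \<Rightarrow> real \<Rightarrow> 'w \<Rightarrow> real) \<Rightarrow> (label \<Rightarrow> real \<Rightarrow> 'w \<Rightarrow> 'a) \<Rightarrow> (label \<Rightarrow> 'w \<Rightarrow> (real \<times> nat) set)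
    \<Rightarrow> label set \<Rightarrow> real \<Rightarrow> real \<Rightarrow> real \<Rightarrow> label \<Rightarrow> real \<Rightarrow> 'w \<Rightarrow> real" where
  "shift_Y lamY X Y \<alpha> Q V t T d i s \<omega> =
     Y i s \<omega> + shift_incr V t T (\<lambda>l. Q l \<omega>) (drift_incr lamY X Y \<alpha> \<omega>) d i s"

lemma branching_sol_shift_Y:
  fixes lamY :: "real^'d \<Rightarrow> real \<Rightarrow> 'a::polish_space \<Rightarrow> real"
  assumes space: "complete_filtered_ps M F"
    and meas_lamY: "(\<lambda>(z, v, a). lamY z v a) \<in> borel_measurable borel"
    and lip: "\<And>z v v' a. \<bar>lamY z v a - lamY z v' a\<bar> \<le> L * \<bar>v - v'\<bar>" and "L > 0"
    and t: "t \<in> {0..T}" and fin: "AE \<omega> in M. \<forall>l. finite (Q l \<omega>)"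
    and prog: "\<And>i. progressive F T (\<alpha> i)"
    and sol: "branching_sol M F T B Q lam sig lamY sigY \<alpha> t V x y1 X Y"
  shows "branching_sol M F T B Q lam sig lamY sigY \<alpha> t V x y2 X (shift_Y lamY X Y \<alpha> Q V t T (y2 - y1))"
proof -
  note sol_parts = sol[unfolded branching_sol_iff]
  obtain II JJ where ito: "\<And>i. particle_ito_integrals M F T B Q sig sigY \<alpha> t V X i (II i) (JJ i)"
    and dyn: "\<And>i. AE \<omega> in M. particle_dynamics T Q lam lamY \<alpha> t V X Y i (II i) (JJ i) \<omega>"
    using conjunct2[OF conjunct2[OF sol_parts]] by metis
  note lipschitz = branching_sol_AE_lipschitz_rhs[OF space meas_lamY lip \<open>L > 0\<close> t fin prog sol]
  show ?thesis
    unfolding branching_sol_iff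
  proof (intro conjI allI exI)
    show "AE \<omega> in M. \<forall>i\<in>V. \<forall>s\<in>{0..t}. X i s \<omega> = x i \<and> shift_Y lamY X Y \<alpha> Q V t T (y2 - y1) i s \<omega> = y2"
      using conjunct1[OF sol_parts] by eventually_elim (simp add: shift_Y_def shift_incr_root_before)
    show "AE \<omega> in M. \<forall>i c b. i @ [c] \<notin> V \<longrightarrow> birth V t T (\<lambda>j. Q j \<omega>) (i @ [c]) = Some b \<longrightarrow>
        X (i @ [c]) b \<omega> = X i b \<omega> \<and>
        shift_Y lamY X Y \<alpha> Q V t T (y2 - y1) (i @ [c]) b \<omega> = shift_Y lamY X Y \<alpha> Q V t T (y2 - y1) i b \<omega>"
      using conjunct1[OF conjunct2[OF sol_parts]]
      by eventually_elim (simp add: shift_Y_def shift_incr_child_at_birth)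
    fix i
    show "particle_ito_integrals M F T B Q sig sigY \<alpha> t V X i (II i) (JJ i)" by (rule ito)
    show "AE \<omega> in M. particle_dynamics T Q lam lamY \<alpha> t V X (shift_Y lamY X Y \<alpha> Q V t T (y2 - y1)) i (II i) (JJ i) \<omega>"
      using dyn[of i] lipschitz
    proof eventually_elim
      case (elim \<omega>)
      let ?D = "shift_incr V t T (\<lambda>l. Q l \<omega>) (drift_incr lamY X Y \<alpha> \<omega>) (y2 - y1) i"
      show ?case
      proof (rule particle_dynamics_shift[where D="?D", OF elim(1)])
        fix b assume b: "birth V t T (\<lambda>l. Q l \<omega>) i = Some b"
        have G: "lipschitz_rhs (drift_incr lamY X Y \<alpha> \<omega> i) L b (stop_time V t T (\<lambda>l. Q l \<omega>) i)"
          using elim(2) b by blast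
        have "\<And>l. finite (Q l \<omega>)" using elim(2) by blast
        from shift_incr_solves[where G="drift_incr lamY X Y \<alpha> \<omega>" and q="\<lambda>l. Q l \<omega>", OF this b G]
        show "lipschitz_rhs (drift_incr lamY X Y \<alpha> \<omega> i) L b (stop_time V t T (\<lambda>l. Q l \<omega>) i) \<and>
          continuous_on {b..stop_time V t T (\<lambda>l. Q l \<omega>) i} ?D \<and>
          (\<forall>s\<in>{b..stop_time V t T (\<lambda>l. Q l \<omega>) i}.
             ?D s = ?D b + integral {b..s} (\<lambda>r. drift_incr lamY X Y \<alpha> \<omega> i r (?D r)))"
          using G by blast
      qed (simp add: shift_Y_def)
    qed
  qed
qed

lemma shift_Y_le:
  fixes lamY :: "real^'d \<Rightarrow> real \<Rightarrow> 'a::polish_space \<Rightarrow> real"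
  assumes space: "complete_filtered_ps M F"
    and meas_lamY: "(\<lambda>(z, v, a). lamY z v a) \<in> borel_measurable borel"
    and lip: "\<And>z v v' a. \<bar>lamY z v a - lamY z v' a\<bar> \<le> L * \<bar>v - v'\<bar>" and "L > 0"
    and t: "t \<in> {0..T}" and fin: "AE \<omega> in M. \<forall>l. finite (Q l \<omega>)"
    and prog: "\<And>i. progressive F T (\<alpha> i)"
    and sol: "branching_sol M F T B Q lam sig lamY sigY \<alpha> t V x y1 X Y"
    and "y2 \<le> y1"
  shows "AE \<omega> in M. \<forall>i. alive_T V t T (\<lambda>l. Q l \<omega>) i \<longrightarrow> shift_Y lamY X Y \<alpha> Q V t T (y2 - y1) i T \<omega> \<le> Y i T \<omega>"
  using branching_sol_AE_lipschitz_rhs[OF space meas_lamY lip \<open>L > 0\<close> t fin prog sol]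
proof eventually_elim
  case (elim \<omega>)
  then have fin_\<omega>: "\<And>l. finite (Q l \<omega>)" by blast
  show ?case
  proof (intro allI impI)
    fix i assume "alive_T V t T (\<lambda>l. Q l \<omega>) i"
    then obtain b where b: "birth V t T (\<lambda>l. Q l \<omega>) i = Some b" and "stop_time V t T (\<lambda>l. Q l \<omega>) i = T"
      by (auto simp: alive_T_def stop_time_def)
    then have "T \<in> {b..stop_time V t T (\<lambda>l. Q l \<omega>) i}"
      using birth_stop_time_bounds[OF t fin_\<omega> b] by simp
    moreover have "\<And>i b. birth V t T (\<lambda>l. Q l \<omega>) i = Some b \<Longrightarrow>
        lipschitz_rhs (drift_incr lamY X Y \<alpha> \<omega> i) L b (stop_time V t T (\<lambda>l. Q l \<omega>) i)"
      using elim by blast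
    moreover have "y2 - y1 \<le> 0" using \<open>y2 \<le> y1\<close> by simp
    ultimately have "shift_incr V t T (\<lambda>l. Q l \<omega>) (drift_incr lamY X Y \<alpha> \<omega>) (y2 - y1) i T \<le> 0"
      using shift_incr_nonpos[OF fin_\<omega> _ _ b] by blast
    then show "shift_Y lamY X Y \<alpha> Q V t T (y2 - y1) i T \<omega> \<le> Y i T \<omega>" by (simp add: shift_Y_def)
  qed
qed

lemma poisson_rm_AE_finite:
  fixes Q :: "label \<Rightarrow> 'w \<Rightarrow> (real \<times> nat) set"
  assumes "\<And>i. poisson_rm M F T \<gamma> p (Q i)"
  shows "AE \<omega> in M. \<forall>l. finite (Q l \<omega>)"
proof -
  have "AE \<omega> in M. finite (Q l \<omega>)" for l
    using assms[of l] unfolding poisson_rm_def by (auto elim: AE_mp)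
  then show ?thesis by (subst AE_all_countable) blast
qed

lemma lamY_lipschitz_in_Y:
  assumes "\<exists>L. \<forall>z z' v v' a.
      norm (lam z a - lam z' a) + norm (sig z a - sig z' a) + \<bar>lamY z v a - lamY z' v' a\<bar>
        + norm (sigY z a - sigY z' a) \<le> L * (norm (z - z') + \<bar>v - v'\<bar>)"
  obtains L where "L > 0" "\<And>z v v' a. \<bar>lamY z v a - lamY z v' a\<bar> \<le> L * \<bar>v - v'\<bar>"
proof -
  obtain L where L: "\<forall>z z' v v' a.
      norm (lam z a - lam z' a) + norm (sig z a - sig z' a) + \<bar>lamY z v a - lamY z' v' a\<bar>
        + norm (sigY z a - sigY z' a) \<le> L * (norm (z - z') + \<bar>v - v'\<bar>)"
    using assms by blast
  show thesis
  proof (rule that)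
    show "\<bar>L\<bar> + 1 > 0" by simp
    fix z v v' a
    have "\<bar>lamY z v a - lamY z v' a\<bar> \<le> L * \<bar>v - v'\<bar>"
      using L[rule_format, of z a z v v'] by simp
    also have "\<dots> \<le> (\<bar>L\<bar> + 1) * \<bar>v - v'\<bar>" by (intro mult_right_mono) auto
    finally show "\<bar>lamY z v a - lamY z v' a\<bar> \<le> (\<bar>L\<bar> + 1) * \<bar>v - v'\<bar>" .
  qed
qed

lemma reach_upward_closed:
  fixes lamY :: "real^'d \<Rightarrow> real \<Rightarrow> 'a::polish_space \<Rightarrow> real"
  assumes space: "complete_filtered_ps M F"
    and meas_lamY: "(\<lambda>(z, v, a). lamY z v a) \<in> borel_measurable borel"
    and lip: "\<And>z v v' a. \<bar>lamY z v a - lamY z v' a\<bar> \<le> L * \<bar>v - v'\<bar>" and "L > 0"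
    and t: "t \<in> {0..T}" and fin: "AE \<omega> in M. \<forall>l. finite (Q l \<omega>)"
    and prog: "\<forall>i. progressive F T (\<alpha> i)"
    and sol: "branching_sol M F T B Q lam sig lamY sigY \<alpha> t V x y X Y"
    and constraint: "\<forall>X Y. branching_sol M F T B Q lam sig lamY sigY \<alpha> t V x y X Y \<longrightarrow>
        (AE \<omega> in M. \<forall>i. alive_T V t T (\<lambda>l. Q l \<omega>) i \<longrightarrow> g i (X i T \<omega>) \<le> Y i T \<omega>)"
    and "y \<le> y'"
  shows "y' \<in> reach M F T B Q lam sig lamY sigY g t V x"
proof -
  note shifted = branching_sol_shift_Y[OF space meas_lamY lip \<open>L > 0\<close> t fin prog[rule_format]]
    and dominated = shift_Y_le[OF space meas_lamY lip \<open>L > 0\<close> t fin prog[rule_format]]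
  have "AE \<omega> in M. \<forall>i. alive_T V t T (\<lambda>l. Q l \<omega>) i \<longrightarrow> g i (X' i T \<omega>) \<le> Y' i T \<omega>"
    if sol': "branching_sol M F T B Q lam sig lamY sigY \<alpha> t V x y' X' Y'" for X' Y'
  proof -
    let ?Y = "shift_Y lamY X' Y' \<alpha> Q V t T (y - y')"
    have "AE \<omega> in M. \<forall>i. alive_T V t T (\<lambda>l. Q l \<omega>) i \<longrightarrow> g i (X' i T \<omega>) \<le> ?Y i T \<omega>"
      using constraint shifted[OF sol', of y] by blast
    moreover have "AE \<omega> in M. \<forall>i. alive_T V t T (\<lambda>l. Q l \<omega>) i \<longrightarrow> ?Y i T \<omega> \<le> Y' i T \<omega>"
      using dominated[OF sol' \<open>y \<le> y'\<close>] .
    ultimately show ?thesis by eventually_elim (meson order_trans)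
  qed
  then show ?thesis
    unfolding reach_def using prog shifted[OF sol, of y'] by blast
qed

theorem proposition2p3:
  fixes M :: "'w measure" and F :: "real \<Rightarrow> 'w measure" and T :: real
    and B :: "label \<Rightarrow> real \<Rightarrow> 'w \<Rightarrow> real^'m"
    and Q :: "label \<Rightarrow> 'w \<Rightarrow> (real \<times> nat) set"
    and \<gamma> :: real and p :: "nat \<Rightarrow> real"
    and lam :: "real^'d \<Rightarrow> 'a::polish_space \<Rightarrow> real^'d"
    and sig :: "real^'d \<Rightarrow> 'a \<Rightarrow> real^'m^'d"
    and lamY :: "real^'d \<Rightarrow> real \<Rightarrow> 'a \<Rightarrow> real"
    and sigY :: "real^'d \<Rightarrow> 'a \<Rightarrow> real^'m"
    and g :: "label \<Rightarrow> real^'d \<Rightarrow> real"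
    and t :: real and V :: "label set" and x :: "label \<Rightarrow> real^'d" and y :: real
  assumes space: "complete_filtered_ps M F"
    and BM: "\<And>i. brownian M F T (B i)"
    and PRM: "\<And>i. poisson_rm M F T \<gamma> p (Q i)"
    and indep: "mutually_indep M T B Q"
    and gamma_pos: "\<gamma> > 0" and p_nonneg: "\<And>k. p k \<ge> 0" and p_sum: "p sums 1"
    and A_bounded: "bounded (UNIV :: 'a set)"
    and meas_lam: "(\<lambda>(z, a). lam z a) \<in> borel_measurable borel"
    and meas_sig: "(\<lambda>(z, a). sig z a) \<in> borel_measurable borel"
    and meas_lamY: "(\<lambda>(z, v, a). lamY z v a) \<in> borel_measurable borel"
    and meas_sigY: "(\<lambda>(z, a). sigY z a) \<in> borel_measurable borel"
    and H0_i: "summable (\<lambda>k. real k * p k)"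
    and H0_ii: "\<exists>C. \<forall>a. norm (lam 0 a) + norm (sig 0 a) + \<bar>lamY 0 0 a\<bar> + norm (sigY 0 a) \<le> C"
    and H0_iii: "\<exists>L. \<forall>z z' v v' a.
        norm (lam z a - lam z' a) + norm (sig z a - sig z' a) + \<bar>lamY z v a - lamY z' v' a\<bar>
          + norm (sigY z a - sigY z' a) \<le> L * (norm (z - z') + \<bar>v - v'\<bar>)"
    and H0_iv: "\<exists>w::real \<Rightarrow> real. mono w \<and> (w \<longlongrightarrow> 0) (at_right 0) \<and>
        (\<forall>z v a a'. norm (lam z a - lam z a') + norm (sig z a - sig z a') + \<bar>lamY z v a - lamY z v a'\<bar>
          + norm (sigY z a - sigY z a') \<le> w (dist a a'))"
    and t_in: "t \<in> {0..T}"
    and mu_E: "in_E V"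
    and y_reach: "y \<in> reach M F T B Q lam sig lamY sigY g t V x"
  shows "{y..} \<subseteq> reach M F T B Q lam sig lamY sigY g t V x"
proof
  fix y' assume "y' \<in> {y..}"
  obtain \<alpha> where prog: "\<forall>i. progressive F T (\<alpha> i)"
    and "\<exists>X Y. branching_sol M F T B Q lam sig lamY sigY \<alpha> t V x y X Y"
    and constraint: "\<forall>X Y. branching_sol M F T B Q lam sig lamY sigY \<alpha> t V x y X Y \<longrightarrow>
        (AE \<omega> in M. \<forall>i. alive_T V t T (\<lambda>l. Q l \<omega>) i \<longrightarrow> g i (X i T \<omega>) \<le> Y i T \<omega>)"
    using y_reach unfolding reach_def by blast
  then obtain X Y where sol: "branching_sol M F T B Q lam sig lamY sigY \<alpha> t V x y X Y" by blast
  obtain L where "L > 0" and lip: "\<And>z v v' a. \<bar>lamY z v a - lamY z v' a\<bar> \<le> L * \<bar>v - v'\<bar>"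
    using lamY_lipschitz_in_Y[OF H0_iii] by blast
  show "y' \<in> reach M F T B Q lam sig lamY sigY g t V x"
    using reach_upward_closed[OF space meas_lamY lip \<open>L > 0\<close> t_in poisson_rm_AE_finite[OF PRM] prog sol constraint]
      \<open>y' \<in> {y..}\<close> by simp
qed

end
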